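(* Fix an integer $n\ge 1$. For every formula $\varphi$ of NM logic in the variables $x_1,\dots,x_n$, $\chi^+([\varphi]_\equiv)$ equals the number of assignments $\mu$ of $x_1,\dots,x_n$ to values in $\{0,\tfrac12,1\}$ such that $\varphi$ evaluates to $1$ in the three-element NM chain $\{0,\tfrac12,1\}$ under $\mu$; i.e. the number of tuples $(a_1,\dots,a_n)\in\{0,\tfrac12,1\}^n$ with $\varphi(a_1,\dots,a_n)=1$.
   Context: An NM algebra is an algebra $\langle A,\wedge,\vee,\odot,\to,\bot,\top\rangle$ such that $(A,\wedge,\vee,\bot,\top)$ is a bounded lattice, $\langle A,\odot,\top\rangle$ is a commutative monoid, and for all $x,y,z$: $x\odot y\le z$ iff $x\le y\to z$; $(x\to y)\vee(y\to x)=\top$; $\neg(x\odot y)\vee((x\wedge y)\to(x\odot y))=\top$ where $\neg x:=x\to\bot$; and $\neg\neg x=x$. The standard NM algebra is $[0,1]$ with $\wedge=\min$, $\vee=\max$, $x\odot y=\min(x,y)$ if $x+y>1$ and $0$ otherwise, $x\to y=1$ if $x\le y$ and $\max(1-x,y)$ otherwise; $\{0,\tfrac12,1\}$ is a subalgebra. $\mathcal{NM}_n$ is the free NM algebra on $n$ generators, i.e. the Lindenbaum algebra of formulas in $x_1,\dots,x_n$ modulo logical equivalence $\equiv$; $[\varphi]_\equiv$ is the class of $\varphi$. It is a finite distributive lattice. A valuation on a distributive lattice $L$ is a map $\nu:L\to\mathbb{R}$ with $\nu(x)+\nu(y)=\nu(x\vee y)+\nu(x\wedge y)$; on a finite distributive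 lattice a valuation is uniquely determined by its values on join-irreducible elements and on $\bot$. An element is join-irreducible if it is not $\bot$ and $x=y\vee z$ implies $x=y$ or $x=z$. The idempotent Euler characteristic $\chi^+:\mathcal{NM}_n\to\mathbb{R}$ is the unique valuation with $\chi^+(\bot)=0$ and, for each join-irreducible $g$, $\chi^+(g)=1$ if $g\odot g=g$ and $\chi^+(g)=0$ otherwise. *)

theory Defs
  imports Complex_Main "HOL-Library.FuncSet"
begin

text \<open>Variables x_1, ..., x_n are represented as Var 0, ..., Var (n-1).\<close>

datatype form =
    Var nat
  | Bot
  | Top
  | And form form      (* lattice meet *)
  | Or form form
  | Conj form form     (* monoidal operation (strong conjunction) *)
  | Imp form form

fun vars :: "form \<Rightarrow> nat set" where
  "vars (Var i) = {i}"
| "vars Bot = {}"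
| "vars Top = {}"
| "vars (And a b) = vars a \<union> vars b"
| "vars (Or a b) = vars a \<union> vars b"
| "vars (Conj a b) = vars a \<union> vars b"
| "vars (Imp a b) = vars a \<union> vars b"

definition Fm :: "nat \<Rightarrow> form set" where
  "Fm n = {\<phi>. vars \<phi> \<subseteq> {..<n}}"

definition nm_algebra ::
  "'a set \<Rightarrow> ('a \<Rightarrow> 'a \<Rightarrow> 'a) \<Rightarrow> ('a \<Rightarrow> 'a \<Rightarrow> 'a) \<Rightarrow> ('a \<Rightarrow> 'a \<Rightarrow> 'a)
     \<Rightarrow> ('a \<Rightarrow> 'a \<Rightarrow> 'a) \<Rightarrow> 'a \<Rightarrow> 'a \<Rightarrow> bool" where
  "nm_algebra A mt jn cj im bt tp \<longleftrightarrow>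
     bt \<in> A \<and> tp \<in> A \<and>
     (\<forall>x\<in>A. \<forall>y\<in>A. mt x y \<in> A \<and> jn x y \<in> A \<and> cj x y \<in> A \<and> im x y \<in> A) \<and>
     \<comment> \<open>bounded lattice\<close>
     (\<forall>x\<in>A. \<forall>y\<in>A. mt x y = mt y x \<and> jn x y = jn y x) \<and>
     (\<forall>x\<in>A. \<forall>y\<in>A. \<forall>z\<in>A. mt x (mt y z) = mt (mt x y) z \<and> jn x (jn y z) = jn (jn x y) z) \<and>
     (\<forall>x\<in>A. \<forall>y\<in>A. mt x (jn x y) = x \<and> jn x (mt x y) = x) \<and>
     (\<forall>x\<in>A. jn x bt = x \<and> mt x tp = x) \<and>
     \<comment> \<open>commutative monoid\<close>
     (\<forall>x\<in>A. \<forall>y\<in>A. cj x y = cj y x) \<and>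
     (\<forall>x\<in>A. \<forall>y\<in>A. \<forall>z\<in>A. cj x (cj y z) = cj (cj x y) z) \<and>
     (\<forall>x\<in>A. cj x tp = x) \<and>
     \<comment> \<open>residuation, with x \<le> y meaning mt x y = x\<close>
     (\<forall>x\<in>A. \<forall>y\<in>A. \<forall>z\<in>A. (mt (cj x y) z = cj x y) \<longleftrightarrow> (mt x (im y z) = x)) \<and>
     \<comment> \<open>prelinearity\<close>
     (\<forall>x\<in>A. \<forall>y\<in>A. jn (im x y) (im y x) = tp) \<and>
     \<comment> \<open>NM axiom\<close>
     (\<forall>x\<in>A. \<forall>y\<in>A. jn (im (cj x y) bt) (im (mt x y) (cj x y)) = tp) \<and>
     \<comment> \<open>involution\<close>
     (\<forall>x\<in>A. im (im x bt) bt = x)"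

fun eval_alg ::
  "('a \<Rightarrow> 'a \<Rightarrow> 'a) \<Rightarrow> ('a \<Rightarrow> 'a \<Rightarrow> 'a) \<Rightarrow> ('a \<Rightarrow> 'a \<Rightarrow> 'a) \<Rightarrow> ('a \<Rightarrow> 'a \<Rightarrow> 'a)
     \<Rightarrow> 'a \<Rightarrow> 'a \<Rightarrow> (nat \<Rightarrow> 'a) \<Rightarrow> form \<Rightarrow> 'a" where
  "eval_alg mt jn cj im bt tp v (Var i) = v i"
| "eval_alg mt jn cj im bt tp v Bot = bt"
| "eval_alg mt jn cj im bt tp v Top = tp"
| "eval_alg mt jn cj im bt tp v (And a b) =
     mt (eval_alg mt jn cj im bt tp v a) (eval_alg mt jn cj im bt tp v b)"
| "eval_alg mt jn cj im bt tp v (Or a b) =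
     jn (eval_alg mt jn cj im bt tp v a) (eval_alg mt jn cj im bt tp v b)"
| "eval_alg mt jn cj im bt tp v (Conj a b) =
     cj (eval_alg mt jn cj im bt tp v a) (eval_alg mt jn cj im bt tp v b)"
| "eval_alg mt jn cj im bt tp v (Imp a b) =
     im (eval_alg mt jn cj im bt tp v a) (eval_alg mt jn cj im bt tp v b)"

text \<open>Carriers are taken to be subsets of nat (countable NM algebras), which suffices since
  the variety of NM algebras is generated by its countable (indeed finite) members.\<close>

definition nm_equiv :: "form \<Rightarrow> form \<Rightarrow> bool" (infix "\<equiv>\<^sub>N\<^sub>M" 50) where
  "\<phi> \<equiv>\<^sub>N\<^sub>M \<psi> \<longleftrightarrow>
     (\<forall>(A::nat set) mt jn cj im bt tp v. nm_algebra A mt jn cj im bt tp \<longrightarrow> (\<forall>i. v i \<in> A) \<longrightarrow>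
        eval_alg mt jn cj im bt tp v \<phi> = eval_alg mt jn cj im bt tp v \<psi>)"

definition cls :: "nat \<Rightarrow> form \<Rightarrow> form set" where
  "cls n \<phi> = {\<psi> \<in> Fm n. \<psi> \<equiv>\<^sub>N\<^sub>M \<phi>}"

definition NM_free :: "nat \<Rightarrow> form set set" where
  "NM_free n = cls n ` Fm n"

definition is_valuation :: "nat \<Rightarrow> (form set \<Rightarrow> real) \<Rightarrow> bool" where
  "is_valuation n \<nu> \<longleftrightarrow>
     (\<forall>\<phi>\<in>Fm n. \<forall>\<psi>\<in>Fm n.
        \<nu> (cls n \<phi>) + \<nu> (cls n \<psi>) = \<nu> (cls n (Or \<phi> \<psi>)) + \<nu> (cls n (And \<phi> \<psi>)))"

definition join_irreducible :: "nat \<Rightarrow> form set \<Rightarrow> bool" where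
  "join_irreducible n X \<longleftrightarrow>
     X \<in> NM_free n \<and> X \<noteq> cls n Bot \<and>
     (\<forall>\<psi>\<in>Fm n. \<forall>\<chi>\<in>Fm n. X = cls n (Or \<psi> \<chi>) \<longrightarrow> X = cls n \<psi> \<or> X = cls n \<chi>)"

definition idempotent_cls :: "nat \<Rightarrow> form set \<Rightarrow> bool" where
  "idempotent_cls n X \<longleftrightarrow> (\<exists>\<phi>\<in>Fm n. X = cls n \<phi> \<and> cls n (Conj \<phi> \<phi>) = X)"

text \<open>The idempotent Euler characteristic: the unique valuation with the prescribed values;
  as a function on form sets it is taken to be 0 outside NM_n, which makes it unique.\<close>

definition chi_plus :: "nat \<Rightarrow> form set \<Rightarrow> real" where
  "chi_plus n = (THE \<nu>. is_valuation n \<nu> \<and> \<nu> (cls n Bot) = 0 \<and>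
       (\<forall>X. join_irreducible n X \<longrightarrow> \<nu> X = (if idempotent_cls n X then 1 else 0)) \<and>
       (\<forall>X. X \<notin> NM_free n \<longrightarrow> \<nu> X = 0))"

definition std_conj :: "real \<Rightarrow> real \<Rightarrow> real" where
  "std_conj x y = (if x + y > 1 then min x y else 0)"

definition std_imp :: "real \<Rightarrow> real \<Rightarrow> real" where
  "std_imp x y = (if x \<le> y then 1 else max (1 - x) y)"

definition eval_std :: "(nat \<Rightarrow> real) \<Rightarrow> form \<Rightarrow> real" where
  "eval_std = eval_alg min max std_conj std_imp 0 1"

end

theory Submission
  imports Defs
begin

text \<open>Two formulas in \<open>n\<close> variables are NM-equivalent iff they agree under all assignments
  into the finite standard subalgebra of fractions with denominator at most \<open>4n + 4\<close>.
  Soundness transports that finite algebra onto a set of naturals. Completeness uses prime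
  filters: modulo a prime filter an NM algebra is a chain on which every operation is computed
  from the order exactly as in \<open>[0, 1]\<close>, and the at most \<open>2n + 2\<close> values of the variables, their
  negations, \<open>\<bottom>\<close> and \<open>\<top>\<close> embed into those fractions with negation becoming \<open>r \<mapsto> 1 - r\<close>.

  Hence counting the models in \<open>{0, 1/2, 1}\<^sup>n\<close> is a well-defined valuation on \<open>NM\<^sub>n\<close>. A
  join-irreducible class lies below \<open>p \<rightarrow> q\<close> or below \<open>q \<rightarrow> p\<close> for all \<open>p, q\<close>; with formulas
  separating the three truth values this leaves at most one three-valued model, and there is
  one exactly when the class is idempotent (a value above \<open>1/2\<close> rounds to \<open>1\<close>, while a
  non-idempotent value lies in \<open>(0, 1/2]\<close>). Valuations agreeing on \<open>\<bottom>\<close> and on the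
  join-irreducibles coincide, so the counting valuation is \<open>\<chi>\<^sup>+\<close>.\<close>

lemma eval_std_simps [simp]:
  "eval_std \<mu> (Var i) = \<mu> i"
  "eval_std \<mu> Bot = 0"
  "eval_std \<mu> Top = 1"
  "eval_std \<mu> (And a b) = min (eval_std \<mu> a) (eval_std \<mu> b)"
  "eval_std \<mu> (Or a b) = max (eval_std \<mu> a) (eval_std \<mu> b)"
  "eval_std \<mu> (Conj a b) = std_conj (eval_std \<mu> a) (eval_std \<mu> b)"
  "eval_std \<mu> (Imp a b) = std_imp (eval_std \<mu> a) (eval_std \<mu> b)"
  by (simp_all add: eval_std_def)

lemma eval_alg_cong:
  "(\<And>i. i \<in> vars \<phi> \<Longrightarrow> v i = w i) \<Longrightarrow>
    eval_alg mt jn cj im bt tp v \<phi> = eval_alg mt jn cj im bt tp w \<phi>"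
  by (induction \<phi>) auto

lemma eval_std_cong: "(\<And>i. i \<in> vars \<phi> \<Longrightarrow> v i = w i) \<Longrightarrow> eval_std v \<phi> = eval_std w \<phi>"
  unfolding eval_std_def by (rule eval_alg_cong)

lemma Fm_simps [simp]:
  "Var i \<in> Fm n \<longleftrightarrow> i < n" "Bot \<in> Fm n" "Top \<in> Fm n"
  "And a b \<in> Fm n \<longleftrightarrow> a \<in> Fm n \<and> b \<in> Fm n" "Or a b \<in> Fm n \<longleftrightarrow> a \<in> Fm n \<and> b \<in> Fm n"
  "Conj a b \<in> Fm n \<longleftrightarrow> a \<in> Fm n \<and> b \<in> Fm n" "Imp a b \<in> Fm n \<longleftrightarrow> a \<in> Fm n \<and> b \<in> Fm n"
  by (auto simp: Fm_def)

section \<open>Elementary arithmetic of NM algebras\<close>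

locale nm_alg =
  fixes A :: "'a set" and mt jn cj im :: "'a \<Rightarrow> 'a \<Rightarrow> 'a" and bt tp :: 'a
  assumes nm: "nm_algebra A mt jn cj im bt tp"
begin

lemma nm_axioms:
  "bt \<in> A" "tp \<in> A"
  "\<forall>x\<in>A. \<forall>y\<in>A. mt x y \<in> A \<and> jn x y \<in> A \<and> cj x y \<in> A \<and> im x y \<in> A"
  "\<forall>x\<in>A. \<forall>y\<in>A. mt x y = mt y x \<and> jn x y = jn y x"
  "\<forall>x\<in>A. \<forall>y\<in>A. \<forall>z\<in>A. mt x (mt y z) = mt (mt x y) z \<and> jn x (jn y z) = jn (jn x y) z"
  "\<forall>x\<in>A. \<forall>y\<in>A. mt x (jn x y) = x \<and> jn x (mt x y) = x"
  "\<forall>x\<in>A. jn x bt = x \<and> mt x tp = x"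
  "\<forall>x\<in>A. \<forall>y\<in>A. cj x y = cj y x"
  "\<forall>x\<in>A. \<forall>y\<in>A. \<forall>z\<in>A. cj x (cj y z) = cj (cj x y) z"
  "\<forall>x\<in>A. cj x tp = x"
  "\<forall>x\<in>A. \<forall>y\<in>A. \<forall>z\<in>A. (mt (cj x y) z = cj x y) \<longleftrightarrow> (mt x (im y z) = x)"
  "\<forall>x\<in>A. \<forall>y\<in>A. jn (im x y) (im y x) = tp"
  "\<forall>x\<in>A. \<forall>y\<in>A. jn (im (cj x y) bt) (im (mt x y) (cj x y)) = tp"
  "\<forall>x\<in>A. im (im x bt) bt = x"
  by (insert nm[unfolded nm_algebra_def], elim conjE, assumption)+

lemma bt_in [simp]: "bt \<in> A" and tp_in [simp]: "tp \<in> A"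
  by (fact nm_axioms(1,2))+

lemma closed [simp]:
  "x \<in> A \<Longrightarrow> y \<in> A \<Longrightarrow> mt x y \<in> A" "x \<in> A \<Longrightarrow> y \<in> A \<Longrightarrow> jn x y \<in> A"
  "x \<in> A \<Longrightarrow> y \<in> A \<Longrightarrow> cj x y \<in> A" "x \<in> A \<Longrightarrow> y \<in> A \<Longrightarrow> im x y \<in> A"
  using nm_axioms(3) by blast+

lemma mt_comm: "x \<in> A \<Longrightarrow> y \<in> A \<Longrightarrow> mt x y = mt y x"
  using nm_axioms(4) by blast
lemma jn_comm: "x \<in> A \<Longrightarrow> y \<in> A \<Longrightarrow> jn x y = jn y x"
  using nm_axioms(4) by blast
lemma mt_assoc: "x \<in> A \<Longrightarrow> y \<in> A \<Longrightarrow> z \<in> A \<Longrightarrow> mt x (mt y z) = mt (mt x y) z"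
  using nm_axioms(5) by blast
lemma jn_assoc: "x \<in> A \<Longrightarrow> y \<in> A \<Longrightarrow> z \<in> A \<Longrightarrow> jn x (jn y z) = jn (jn x y) z"
  using nm_axioms(5) by blast
lemma mt_jn_absorb: "x \<in> A \<Longrightarrow> y \<in> A \<Longrightarrow> mt x (jn x y) = x"
  using nm_axioms(6) by blast
lemma jn_mt_absorb: "x \<in> A \<Longrightarrow> y \<in> A \<Longrightarrow> jn x (mt x y) = x"
  using nm_axioms(6) by blast
lemma jn_bt: "x \<in> A \<Longrightarrow> jn x bt = x"
  using nm_axioms(7) by blast
lemma mt_tp: "x \<in> A \<Longrightarrow> mt x tp = x"
  using nm_axioms(7) by blast
lemma cj_comm: "x \<in> A \<Longrightarrow> y \<in> A \<Longrightarrow> cj x y = cj y x"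
  using nm_axioms(8) by blast
lemma cj_assoc: "x \<in> A \<Longrightarrow> y \<in> A \<Longrightarrow> z \<in> A \<Longrightarrow> cj x (cj y z) = cj (cj x y) z"
  using nm_axioms(9) by blast
lemma cj_tp: "x \<in> A \<Longrightarrow> cj x tp = x"
  using nm_axioms(10) by blast
lemma residuation_eq:
  "x \<in> A \<Longrightarrow> y \<in> A \<Longrightarrow> z \<in> A \<Longrightarrow> mt (cj x y) z = cj x y \<longleftrightarrow> mt x (im y z) = x"
  using nm_axioms(11) by blast
lemma prelinearity: "x \<in> A \<Longrightarrow> y \<in> A \<Longrightarrow> jn (im x y) (im y x) = tp"
  using nm_axioms(12) by blast
lemma nm_axiom: "x \<in> A \<Longrightarrow> y \<in> A \<Longrightarrow> jn (im (cj x y) bt) (im (mt x y) (cj x y)) = tp"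
  using nm_axioms(13) by blast
lemma im_bt_involutive: "x \<in> A \<Longrightarrow> im (im x bt) bt = x"
  using nm_axioms(14) by blast

definition le :: "'a \<Rightarrow> 'a \<Rightarrow> bool" where
  "le x y \<longleftrightarrow> mt x y = x"

lemma mt_idem: "x \<in> A \<Longrightarrow> mt x x = x"
  using mt_jn_absorb[of x "mt x x"] jn_mt_absorb[of x x] by simp

lemma le_iff_jn: "x \<in> A \<Longrightarrow> y \<in> A \<Longrightarrow> le x y \<longleftrightarrow> jn x y = y"
  unfolding le_def using jn_mt_absorb[of y x] mt_jn_absorb[of x y] by (auto simp: jn_comm mt_comm)

lemma le_refl: "x \<in> A \<Longrightarrow> le x x"
  by (simp add: le_def mt_idem)
lemma le_antisym: "x \<in> A \<Longrightarrow> y \<in> A \<Longrightarrow> le x y \<Longrightarrow> le y x \<Longrightarrow> x = y"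
  unfolding le_def by (metis mt_comm)
lemma le_trans: "x \<in> A \<Longrightarrow> y \<in> A \<Longrightarrow> z \<in> A \<Longrightarrow> le x y \<Longrightarrow> le y z \<Longrightarrow> le x z"
  unfolding le_def by (metis mt_assoc)
lemma mt_le1: "x \<in> A \<Longrightarrow> y \<in> A \<Longrightarrow> le (mt x y) x"
  unfolding le_def by (metis mt_assoc mt_comm mt_idem)
lemma le_mt_iff: "x \<in> A \<Longrightarrow> y \<in> A \<Longrightarrow> z \<in> A \<Longrightarrow> le z (mt x y) \<longleftrightarrow> le z x \<and> le z y"
  unfolding le_def by (metis mt_assoc mt_comm mt_idem closed(1))
lemma jn_ge1: "x \<in> A \<Longrightarrow> y \<in> A \<Longrightarrow> le x (jn x y)"
  unfolding le_def by (simp add: mt_jn_absorb)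
lemma jn_ge2: "x \<in> A \<Longrightarrow> y \<in> A \<Longrightarrow> le y (jn x y)"
  by (metis jn_comm jn_ge1)
lemma le_jn_iff: "x \<in> A \<Longrightarrow> y \<in> A \<Longrightarrow> z \<in> A \<Longrightarrow> le (jn x y) z \<longleftrightarrow> le x z \<and> le y z"
  by (simp add: le_iff_jn) (metis jn_assoc jn_comm jn_ge1 jn_ge2 le_iff_jn closed(2))
lemma jn_lub: "x \<in> A \<Longrightarrow> y \<in> A \<Longrightarrow> z \<in> A \<Longrightarrow> le x z \<Longrightarrow> le y z \<Longrightarrow> le (jn x y) z"
  by (simp add: le_jn_iff)
lemma bt_le: "x \<in> A \<Longrightarrow> le bt x"
  by (metis bt_in jn_bt jn_comm le_iff_jn)
lemma le_tp: "x \<in> A \<Longrightarrow> le x tp"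
  by (simp add: le_def mt_tp)
lemma tp_le_imp_eq: "x \<in> A \<Longrightarrow> le tp x \<Longrightarrow> x = tp"
  by (simp add: le_antisym le_tp)
lemma eq_by_lower_bounds: "x \<in> A \<Longrightarrow> y \<in> A \<Longrightarrow> (\<And>w. w \<in> A \<Longrightarrow> le w x \<longleftrightarrow> le w y) \<Longrightarrow> x = y"
  by (meson le_antisym le_refl)
lemma eq_by_upper_bounds: "x \<in> A \<Longrightarrow> y \<in> A \<Longrightarrow> (\<And>w. w \<in> A \<Longrightarrow> le x w \<longleftrightarrow> le y w) \<Longrightarrow> x = y"
  by (meson le_antisym le_refl)

lemma residuation: "x \<in> A \<Longrightarrow> y \<in> A \<Longrightarrow> z \<in> A \<Longrightarrow> le (cj x y) z \<longleftrightarrow> le x (im y z)"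
  unfolding le_def using residuation_eq by blast
lemma residuation': "x \<in> A \<Longrightarrow> y \<in> A \<Longrightarrow> z \<in> A \<Longrightarrow> le (cj y x) z \<longleftrightarrow> le x (im y z)"
  by (simp add: cj_comm residuation)

lemma tp_cj: "x \<in> A \<Longrightarrow> cj tp x = x"
  by (metis cj_comm cj_tp tp_in)
lemma cj_mono_left: "x \<in> A \<Longrightarrow> y \<in> A \<Longrightarrow> z \<in> A \<Longrightarrow> le x y \<Longrightarrow> le (cj x z) (cj y z)"
  by (meson closed(3,4) le_refl le_trans residuation)
lemma cj_mono: "x \<in> A \<Longrightarrow> y \<in> A \<Longrightarrow> x' \<in> A \<Longrightarrow> y' \<in> A \<Longrightarrow> le x x' \<Longrightarrow> le y y' \<Longrightarrow>
    le (cj x y) (cj x' y')"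
  by (metis cj_comm cj_mono_left closed(3) le_trans)
lemma cj_le1: "x \<in> A \<Longrightarrow> y \<in> A \<Longrightarrow> le (cj x y) x"
  by (metis cj_mono cj_tp le_refl le_tp tp_in)
lemma cj_le2: "x \<in> A \<Longrightarrow> y \<in> A \<Longrightarrow> le (cj x y) y"
  by (metis cj_comm cj_le1)

lemma le_iff_im_tp: "x \<in> A \<Longrightarrow> y \<in> A \<Longrightarrow> le x y \<longleftrightarrow> im x y = tp"
  by (metis closed(4) le_tp residuation tp_cj tp_in tp_le_imp_eq)
lemma im_refl: "x \<in> A \<Longrightarrow> im x x = tp"
  using le_iff_im_tp le_refl by blast
lemma tp_im: "x \<in> A \<Longrightarrow> im tp x = x"
  by (rule eq_by_lower_bounds) (simp_all add: residuation[symmetric] cj_tp)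
lemma modus_ponens: "x \<in> A \<Longrightarrow> y \<in> A \<Longrightarrow> le (cj x (im x y)) y"
  by (simp add: residuation' le_refl)

lemma im_trans:
  assumes x: "x \<in> A" and y: "y \<in> A" and z: "z \<in> A"
  shows "le (cj (im x y) (im y z)) (im x z)"
proof -
  have "cj (cj (im x y) (im y z)) x = cj (im y z) (cj x (im x y))"
    using x y z by (metis cj_assoc cj_comm closed(4))
  moreover have "le (cj (im y z) (cj x (im x y))) (cj (im y z) y)"
    using x y z by (simp add: cj_mono le_refl modus_ponens)
  moreover have "le (cj (im y z) y) z"
    using y z by (simp add: cj_comm modus_ponens)
  ultimately have "le (cj (cj (im x y) (im y z)) x) z"
    using x y z by (metis closed(3,4) le_trans)
  then show ?thesis
    using x y z by (simp add: residuation)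
qed

lemma im_cj: "x \<in> A \<Longrightarrow> y \<in> A \<Longrightarrow> z \<in> A \<Longrightarrow> im (cj x y) z = im x (im y z)"
  by (rule eq_by_lower_bounds) (simp_all add: residuation[symmetric] cj_assoc)

lemma le_im_swap: "x \<in> A \<Longrightarrow> y \<in> A \<Longrightarrow> z \<in> A \<Longrightarrow> le x (im y z) \<longleftrightarrow> le y (im x z)"
  by (metis residuation residuation')

lemma im_jn:
  assumes x: "x \<in> A" and y: "y \<in> A" and z: "z \<in> A"
  shows "im (jn x y) z = mt (im x z) (im y z)"
proof (rule eq_by_lower_bounds)
  fix w assume w: "w \<in> A"
  have "le w (im (jn x y) z) \<longleftrightarrow> le (jn x y) (im w z)"
    using w x y z by (simp add: le_im_swap[of w])
  also have "\<dots> \<longleftrightarrow> le x (im w z) \<and> le y (im w z)"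
    using w x y z by (simp add: le_jn_iff)
  also have "\<dots> \<longleftrightarrow> le w (mt (im x z) (im y z))"
    using w x y z by (simp add: le_mt_iff le_im_swap[of w])
  finally show "le w (im (jn x y) z) \<longleftrightarrow> le w (mt (im x z) (im y z))" .
qed (use x y z in simp_all)

lemma im_mt: "x \<in> A \<Longrightarrow> y \<in> A \<Longrightarrow> z \<in> A \<Longrightarrow> im z (mt x y) = mt (im z x) (im z y)"
  by (rule eq_by_lower_bounds) (simp_all add: residuation[symmetric] le_mt_iff)

lemma cj_jn_distrib: "x \<in> A \<Longrightarrow> y \<in> A \<Longrightarrow> z \<in> A \<Longrightarrow> cj x (jn y z) = jn (cj x y) (cj x z)"
  by (rule eq_by_upper_bounds) (simp_all add: residuation' le_jn_iff)

section \<open>Prime filters\<close>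

definition is_filter :: "'a set \<Rightarrow> bool" where
  "is_filter F \<longleftrightarrow> F \<subseteq> A \<and> tp \<in> F \<and> (\<forall>x\<in>F. \<forall>y\<in>A. le x y \<longrightarrow> y \<in> F) \<and>
    (\<forall>x\<in>F. \<forall>y\<in>F. cj x y \<in> F)"

primrec cj_pow :: "'a \<Rightarrow> nat \<Rightarrow> 'a" where
  "cj_pow a 0 = tp" | "cj_pow a (Suc k) = cj a (cj_pow a k)"

lemma cj_pow_closed[simp]: "a \<in> A \<Longrightarrow> cj_pow a k \<in> A"
  by (induction k) simp_all

lemma cj_pow_add: "a \<in> A \<Longrightarrow> cj_pow a (k + m) = cj (cj_pow a k) (cj_pow a m)"
  by (induction k) (simp_all add: tp_cj cj_assoc)

lemma cj_pow_antimono: "a \<in> A \<Longrightarrow> le (cj_pow a (k + m)) (cj_pow a k)"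
  by (simp add: cj_pow_add cj_le1)

lemma cj_cj_swap:
  assumes a: "a \<in> A" and b: "b \<in> A" and c: "c \<in> A" and d: "d \<in> A"
  shows "cj (cj a b) (cj c d) = cj (cj a c) (cj b d)"
proof -
  have "cj (cj a b) (cj c d) = cj a (cj (cj b c) d)"
    using a b c d by (simp add: cj_assoc)
  also have "\<dots> = cj a (cj (cj c b) d)"
    using b c by (simp add: cj_comm)
  also have "\<dots> = cj (cj a c) (cj b d)"
    using a b c d by (simp add: cj_assoc)
  finally show ?thesis .
qed

definition filter_adjoin :: "'a set \<Rightarrow> 'a \<Rightarrow> 'a set" where
  "filter_adjoin F a = {z \<in> A. \<exists>f\<in>F. \<exists>k. le (cj f (cj_pow a k)) z}"

lemma is_filter_adjoin: assumes F: "is_filter F" and a: "a \<in> A" shows "is_filter (filter_adjoin F a)"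
proof -
  have F_subset: "F \<subseteq> A" and tp_in_F: "tp \<in> F" and F_cj_closed: "\<forall>x\<in>F. \<forall>y\<in>F. cj x y \<in> F"
    using F unfolding is_filter_def by blast+
  have "tp \<in> filter_adjoin F a"
    unfolding filter_adjoin_def using tp_in_F
    by (intro CollectI conjI tp_in bexI[of _ tp] exI[of _ 0]) (simp_all add: cj_tp le_refl)
  moreover have "\<forall>x\<in>filter_adjoin F a. \<forall>y\<in>A. le x y \<longrightarrow> y \<in> filter_adjoin F a"
  proof (intro ballI impI)
    fix x y assume x: "x \<in> filter_adjoin F a" and y: "y \<in> A" and xy: "le x y"
    then obtain f k where f: "f \<in> F" and l: "le (cj f (cj_pow a k)) x" and xA: "x \<in> A"
      unfolding filter_adjoin_def by blast
    have "f \<in> A" using f F_subset by auto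
    then have "le (cj f (cj_pow a k)) y" using l xy xA y a by (meson closed cj_pow_closed le_trans)
    then show "y \<in> filter_adjoin F a" unfolding filter_adjoin_def using f y by blast
  qed
  moreover have "\<forall>x\<in>filter_adjoin F a. \<forall>y\<in>filter_adjoin F a. cj x y \<in> filter_adjoin F a"
  proof (intro ballI)
    fix x y assume x: "x \<in> filter_adjoin F a" and y: "y \<in> filter_adjoin F a"
    then obtain f1 k1 f2 k2 where f1: "f1 \<in> F" and l1: "le (cj f1 (cj_pow a k1)) x"
      and f2: "f2 \<in> F" and l2: "le (cj f2 (cj_pow a k2)) y" and xA: "x \<in> A" and yA: "y \<in> A"
      unfolding filter_adjoin_def by blast
    have f1A: "f1 \<in> A" and f2A: "f2 \<in> A" using f1 f2 F_subset by auto
    have "cj (cj f1 f2) (cj_pow a (k1 + k2)) = cj (cj f1 (cj_pow a k1)) (cj f2 (cj_pow a k2))"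
      using f1A f2A a by (simp add: cj_pow_add cj_cj_swap)
    moreover have "le (cj (cj f1 (cj_pow a k1)) (cj f2 (cj_pow a k2))) (cj x y)"
      using l1 l2 f1A f2A a xA yA by (simp add: cj_mono)
    ultimately have "le (cj (cj f1 f2) (cj_pow a (k1 + k2))) (cj x y)" by simp
    moreover have "cj f1 f2 \<in> F" using F_cj_closed f1 f2 by blast
    ultimately show "cj x y \<in> filter_adjoin F a" unfolding filter_adjoin_def using xA yA by auto
  qed
  ultimately show ?thesis unfolding is_filter_def filter_adjoin_def by blast
qed

lemma filter_adjoin_superset: assumes F: "is_filter F" and a: "a \<in> A" shows "F \<subseteq> filter_adjoin F a"
proof
  fix f assume f: "f \<in> F"
  then have "f \<in> A" using F unfolding is_filter_def by blast
  then show "f \<in> filter_adjoin F a" unfolding filter_adjoin_def using f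
    by (intro CollectI conjI bexI[of _ f] exI[of _ 0]) (simp_all add: cj_tp le_refl)
qed

lemma mem_filter_adjoin: assumes F: "is_filter F" and a: "a \<in> A" shows "a \<in> filter_adjoin F a"
proof -
  have "tp \<in> F" using F unfolding is_filter_def by blast
  then show ?thesis unfolding filter_adjoin_def using a
    by (intro CollectI conjI bexI[of _ tp] exI[of _ 1]) (simp_all add: cj_tp tp_cj le_refl)
qed

lemma jn_cj_eq_tp: assumes a: "a \<in> A" and b: "b \<in> A" and c: "c \<in> A"
  and ab: "jn a b = tp" and ac: "jn a c = tp" shows "jn a (cj b c) = tp"
proof -
  have "tp = cj (jn a b) (jn a c)" using ab ac by (simp add: cj_tp)
  also have "\<dots> = jn (cj (jn a b) a) (cj (jn a b) c)" using a b c by (simp add: cj_jn_distrib)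
  finally have e: "tp = jn (cj (jn a b) a) (cj (jn a b) c)" .
  have l1: "le (cj (jn a b) a) (jn a (cj b c))"
    using a b c by (meson cj_le2 closed jn_ge1 le_trans)
  have "cj (jn a b) c = cj c (jn a b)" using a b c by (simp add: cj_comm)
  also have "\<dots> = jn (cj c a) (cj c b)" using a b c by (simp add: cj_jn_distrib)
  also have "cj c b = cj b c" using c b by (rule cj_comm)
  finally have e2: "cj (jn a b) c = jn (cj c a) (cj b c)" .
  have "le (jn (cj c a) (cj b c)) (jn a (cj b c))"
    using a b c by (meson cj_le2 closed jn_ge1 jn_ge2 jn_lub le_trans)
  then have l2: "le (cj (jn a b) c) (jn a (cj b c))" using e2 by simp
  have "le tp (jn a (cj b c))" using l1 l2 a b c e by (metis closed jn_lub)
  then show ?thesis using a b c by (simp add: tp_le_imp_eq)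
qed

lemma jn_cj_pow_eq_tp_right: assumes a: "a \<in> A" and b: "b \<in> A" and ab: "jn a b = tp" shows "jn a (cj_pow b N) = tp"
proof (induction N)
  case 0 show ?case using a by (simp add: le_iff_jn[symmetric] le_tp)
next
  case (Suc N) show ?case using jn_cj_eq_tp[OF a b _ ab Suc] b by simp
qed

lemma jn_cj_pow_eq_tp: assumes a: "a \<in> A" and b: "b \<in> A" and ab: "jn a b = tp"
  shows "jn (cj_pow a N) (cj_pow b N) = tp"
proof -
  have "jn b a = tp" using ab a b by (simp add: jn_comm)
  then have "jn b (cj_pow a N) = tp" using jn_cj_pow_eq_tp_right a b by blast
  then have "jn (cj_pow a N) b = tp" using a b by (simp add: jn_comm)
  then show ?thesis using jn_cj_pow_eq_tp_right a b by simp
qed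

lemma le_of_jn_eq_tp:
  assumes f: "f \<in> A" and a: "a \<in> A" and b: "b \<in> A" and c: "c \<in> A"
    and ab: "jn a b = tp" and fa: "le (cj f a) c" and fb: "le (cj f b) c"
  shows "le f c"
proof -
  have "f = jn (cj f a) (cj f b)"
    using f a b ab by (metis cj_jn_distrib cj_tp)
  then show ?thesis
    using f a b c fa fb by (metis closed(3) jn_lub)
qed

lemma maximal_filter_adjoin_witness:
  assumes F: "is_filter F" and c: "c \<notin> F"
    and max: "\<And>G. is_filter G \<Longrightarrow> c \<notin> G \<Longrightarrow> F \<subseteq> G \<Longrightarrow> G = F"
    and a: "a \<in> A" "a \<notin> F"
  obtains f k where "f \<in> F" and "le (cj f (cj_pow a k)) c"
proof -
  have "c \<in> filter_adjoin F a"
    using max[OF is_filter_adjoin[OF F a(1)] _ filter_adjoin_superset[OF F a(1)]]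
      mem_filter_adjoin[OF F a(1)] a(2) by blast
  then show ?thesis
    using that unfolding filter_adjoin_def by blast
qed

text \<open>A filter maximal among those omitting \<open>c\<close> is prime: otherwise adjoining either
  \<open>x \<rightarrow> y\<close> or \<open>y \<rightarrow> x\<close> reaches \<open>c\<close>, and prelinearity (raised to a common power) puts \<open>c\<close> in \<open>F\<close>.\<close>

lemma maximal_filter_prime:
  assumes F: "is_filter F" and c: "c \<in> A" "c \<notin> F"
    and max: "\<And>G. is_filter G \<Longrightarrow> c \<notin> G \<Longrightarrow> F \<subseteq> G \<Longrightarrow> G = F"
    and x: "x \<in> A" and y: "y \<in> A"
  shows "im x y \<in> F \<or> im y x \<in> F"
proof (rule ccontr)
  define p q where "p = im x y" and "q = im y x"
  have p: "p \<in> A" and q: "q \<in> A"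
    using x y by (simp_all add: p_def q_def)
  assume "\<not> (im x y \<in> F \<or> im y x \<in> F)"
  then obtain f1 k1 f2 k2 where f1: "f1 \<in> F" "le (cj f1 (cj_pow p k1)) c"
    and f2: "f2 \<in> F" "le (cj f2 (cj_pow q k2)) c"
    using maximal_filter_adjoin_witness[OF F c(2) max p] maximal_filter_adjoin_witness[OF F c(2) max q]
    unfolding p_def q_def by metis
  have F_A: "f1 \<in> A" "f2 \<in> A"
    using F f1 f2 unfolding is_filter_def by auto
  define f k where "f = cj f1 f2" and "k = k1 + k2"
  have f: "f \<in> A"
    using F_A by (simp add: f_def)
  have "le (cj f (cj_pow p k)) (cj f1 (cj_pow p k1))"
    unfolding f_def k_def using F_A p by (simp add: cj_mono cj_le1 cj_pow_antimono)
  then have fp: "le (cj f (cj_pow p k)) c"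
    using f1 f p c by (meson F_A closed cj_pow_closed le_trans)
  have "le (cj f (cj_pow q k)) (cj f2 (cj_pow q k2))"
    unfolding f_def k_def using F_A q cj_pow_antimono[of q k2 k1]
    by (simp add: cj_mono cj_le2 add.commute)
  then have fq: "le (cj f (cj_pow q k)) c"
    using f2 f q c by (meson F_A closed cj_pow_closed le_trans)
  have "jn (cj_pow p k) (cj_pow q k) = tp"
    using jn_cj_pow_eq_tp[OF p q] prelinearity[OF x y] by (simp add: p_def q_def)
  then have "le f c"
    using le_of_jn_eq_tp[OF f _ _ c(1) _ fp fq] p q by simp
  moreover have "f \<in> F"
    using F f1 f2 unfolding is_filter_def f_def by blast
  ultimately show False
    using F c unfolding is_filter_def by blast
qed

lemma is_filter_Union_chain:
  assumes "C \<noteq> {}" and filters: "\<And>G. G \<in> C \<Longrightarrow> is_filter G"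
    and chain: "\<And>X Y. X \<in> C \<Longrightarrow> Y \<in> C \<Longrightarrow> X \<subseteq> Y \<or> Y \<subseteq> X"
  shows "is_filter (\<Union>C)"
proof -
  have "cj x y \<in> \<Union>C" if xy: "x \<in> \<Union>C" "y \<in> \<Union>C" for x y
  proof -
    obtain X Y where "X \<in> C" "x \<in> X" "Y \<in> C" "y \<in> Y"
      using xy by blast
    then obtain G where "G \<in> C" "x \<in> G" "y \<in> G"
      using chain by blast
    then show ?thesis
      using filters unfolding is_filter_def by blast
  qed
  moreover have "\<Union>C \<subseteq> A" "tp \<in> \<Union>C" "\<forall>x\<in>\<Union>C. \<forall>y\<in>A. le x y \<longrightarrow> y \<in> \<Union>C"
    using filters \<open>C \<noteq> {}\<close> unfolding is_filter_def by blast+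
  ultimately show ?thesis
    unfolding is_filter_def by blast
qed

lemma prime_filter_omitting:
  assumes c: "c \<in> A" "c \<noteq> tp"
  obtains F where "is_filter F" "c \<notin> F" "\<And>x y. x \<in> A \<Longrightarrow> y \<in> A \<Longrightarrow> im x y \<in> F \<or> im y x \<in> F"
proof -
  define \<F> where "\<F> = {G. is_filter G \<and> c \<notin> G}"
  have "{tp} \<in> \<F>"
    unfolding \<F>_def is_filter_def using c by (auto simp: cj_tp tp_le_imp_eq)
  moreover have "\<Union>C \<in> \<F>" if "C \<noteq> {}" "subset.chain \<F> C" for C
    using that is_filter_Union_chain[of C] unfolding \<F>_def subset_chain_def by blast
  ultimately obtain M where "M \<in> \<F>" and "\<forall>G\<in>\<F>. M \<subseteq> G \<longrightarrow> G = M"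
    using subset_Zorn_nonempty[of \<F>] by blast
  then have M: "is_filter M" "c \<notin> M"
    and max: "\<And>G. is_filter G \<Longrightarrow> c \<notin> G \<Longrightarrow> M \<subseteq> G \<Longrightarrow> G = M"
    unfolding \<F>_def by blast+
  show ?thesis
    by (rule that[OF M]) (rule maximal_filter_prime[OF M(1) c(1) M(2) max])
qed

definition neg :: "'a \<Rightarrow> 'a" where
  "neg x = im x bt"

lemma neg_closed [simp]: "x \<in> A \<Longrightarrow> neg x \<in> A"
  by (simp add: neg_def)
lemma neg_neg [simp]: "x \<in> A \<Longrightarrow> neg (neg x) = x"
  by (simp add: neg_def im_bt_involutive)
lemma neg_bt [simp]: "neg bt = tp"
  by (simp add: neg_def im_refl)
lemma neg_tp [simp]: "neg tp = bt"
  by (simp add: neg_def tp_im)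

lemma tp_mt: "x \<in> A \<Longrightarrow> mt tp x = x"
  by (metis mt_comm mt_tp tp_in)

lemma eval_alg_closed: "(\<And>i. v i \<in> A) \<Longrightarrow> eval_alg mt jn cj im bt tp v \<phi> \<in> A"
  by (induction \<phi>) auto

end

section \<open>Completeness for finite standard subalgebras\<close>

locale nm_prime_filter = nm_alg +
  fixes F :: "'a set"
  assumes filter_F: "is_filter F" and bt_notin_F: "bt \<notin> F"
    and prime_F: "x \<in> A \<Longrightarrow> y \<in> A \<Longrightarrow> im x y \<in> F \<or> im y x \<in> F"
begin

definition le_mod :: "'a \<Rightarrow> 'a \<Rightarrow> bool" where
  "le_mod x y \<longleftrightarrow> im x y \<in> F"

definition eq_mod :: "'a \<Rightarrow> 'a \<Rightarrow> bool" where
  "eq_mod x y \<longleftrightarrow> le_mod x y \<and> le_mod y x"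

lemma F_subset: "F \<subseteq> A" and tp_in_F: "tp \<in> F"
  and F_upward: "x \<in> F \<Longrightarrow> y \<in> A \<Longrightarrow> le x y \<Longrightarrow> y \<in> F"
  and F_cj_closed: "x \<in> F \<Longrightarrow> y \<in> F \<Longrightarrow> cj x y \<in> F"
  using filter_F unfolding is_filter_def by blast+

lemma F_modus_ponens: "x \<in> F \<Longrightarrow> y \<in> A \<Longrightarrow> im x y \<in> F \<Longrightarrow> y \<in> F"
  by (meson F_cj_closed F_subset F_upward closed(3) modus_ponens subsetD)

lemma F_jn_prime:
  assumes x: "x \<in> A" and y: "y \<in> A" and xy: "jn x y \<in> F"
  shows "x \<in> F \<or> y \<in> F"
proof -
  have "im (jn x y) y = im x y" and "im (jn x y) x = im y x"
    using x y by (simp_all add: im_jn im_refl mt_tp tp_mt)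
  then show ?thesis
    using prime_F[OF x y] F_modus_ponens[OF xy] x y by metis
qed

lemma le_imp_le_mod: "x \<in> A \<Longrightarrow> y \<in> A \<Longrightarrow> le x y \<Longrightarrow> le_mod x y"
  by (simp add: le_mod_def le_iff_im_tp tp_in_F)
lemma le_mod_refl: "x \<in> A \<Longrightarrow> le_mod x x"
  by (simp add: le_imp_le_mod le_refl)
lemma le_mod_trans:
  "x \<in> A \<Longrightarrow> y \<in> A \<Longrightarrow> z \<in> A \<Longrightarrow> le_mod x y \<Longrightarrow> le_mod y z \<Longrightarrow> le_mod x z"
  unfolding le_mod_def by (meson F_cj_closed F_upward closed(3,4) im_trans)
lemma le_mod_total: "x \<in> A \<Longrightarrow> y \<in> A \<Longrightarrow> le_mod x y \<or> le_mod y x"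
  by (simp add: le_mod_def prime_F)
lemma bt_le_mod: "x \<in> A \<Longrightarrow> le_mod bt x"
  by (simp add: le_imp_le_mod bt_le)
lemma le_mod_tp: "x \<in> A \<Longrightarrow> le_mod x tp"
  by (simp add: le_imp_le_mod le_tp)
lemma not_le_mod_tp_bt: "\<not> le_mod tp bt"
  using bt_notin_F by (simp add: le_mod_def tp_im)

lemma le_mod_neg:
  assumes x: "x \<in> A" and y: "y \<in> A" and xy: "le_mod x y"
  shows "le_mod (neg y) (neg x)"
proof -
  have "le (im x y) (im (neg y) (neg x))"
    using x y im_trans[OF x y bt_in] by (simp add: residuation neg_def)
  then show ?thesis
    using xy F_upward x y unfolding le_mod_def by simp
qed

lemma le_mod_neg_iff: "x \<in> A \<Longrightarrow> y \<in> A \<Longrightarrow> le_mod (neg y) (neg x) \<longleftrightarrow> le_mod x y"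
  by (metis le_mod_neg neg_closed neg_neg)

lemma eq_mod_refl: "x \<in> A \<Longrightarrow> eq_mod x x"
  by (simp add: eq_mod_def le_mod_refl)
lemma eq_mod_trans: "x \<in> A \<Longrightarrow> y \<in> A \<Longrightarrow> z \<in> A \<Longrightarrow> eq_mod x y \<Longrightarrow> eq_mod y z \<Longrightarrow> eq_mod x z"
  unfolding eq_mod_def by (meson le_mod_trans)
lemma eq_mod_neg: "x \<in> A \<Longrightarrow> y \<in> A \<Longrightarrow> eq_mod x y \<Longrightarrow> eq_mod (neg x) (neg y)"
  unfolding eq_mod_def by (simp add: le_mod_neg)

lemma eq_mod_mt: "x \<in> A \<Longrightarrow> y \<in> A \<Longrightarrow> le_mod x y \<Longrightarrow> eq_mod (mt x y) x"
  unfolding eq_mod_def le_mod_def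
  by (simp add: im_mt im_refl tp_mt le_imp_le_mod[unfolded le_mod_def] mt_le1)

lemma eq_mod_jn: "x \<in> A \<Longrightarrow> y \<in> A \<Longrightarrow> le_mod x y \<Longrightarrow> eq_mod (jn x y) y"
  unfolding eq_mod_def le_mod_def
  by (simp add: im_jn im_refl mt_tp le_imp_le_mod[unfolded le_mod_def] jn_ge2)

lemma eq_mod_cj_bt: "x \<in> A \<Longrightarrow> y \<in> A \<Longrightarrow> le_mod x (neg y) \<Longrightarrow> eq_mod (cj x y) bt"
  unfolding eq_mod_def by (simp add: le_mod_def im_cj neg_def bt_le_mod[unfolded le_mod_def])

text \<open>This is where the NM axiom enters: modulo a prime filter, \<open>cj x y\<close> is either
  \<open>bt\<close> or \<open>mt x y\<close>, exactly as in the standard algebra.\<close>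

lemma eq_mod_cj_mt:
  assumes x: "x \<in> A" and y: "y \<in> A" and xy: "\<not> le_mod x (neg y)"
  shows "eq_mod (cj x y) (mt x y)"
proof -
  have "im (cj x y) bt \<in> F \<or> im (mt x y) (cj x y) \<in> F"
    using nm_axiom[OF x y] tp_in_F x y by (intro F_jn_prime) simp_all
  moreover have "im (cj x y) bt = im x (neg y)"
    using x y by (simp add: im_cj neg_def)
  moreover have "le (cj x y) (mt x y)"
    using x y by (simp add: le_mt_iff cj_le1 cj_le2)
  ultimately show ?thesis
    using x y xy unfolding eq_mod_def by (auto simp: le_mod_def le_imp_le_mod[unfolded le_mod_def])
qed

lemma eq_mod_im_tp: "x \<in> A \<Longrightarrow> y \<in> A \<Longrightarrow> le_mod x y \<Longrightarrow> eq_mod (im x y) tp"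
  unfolding eq_mod_def by (simp add: le_mod_tp) (simp add: le_mod_def tp_im)

lemma eq_mod_im_neg:
  assumes x: "x \<in> A" and y: "y \<in> A" and xy: "\<not> le_mod x y"
  shows "eq_mod (im x y) (neg (mt x (neg y)))"
proof -
  have "im x y = neg (cj x (neg y))"
    using x y by (simp add: neg_def im_cj im_bt_involutive)
  moreover have "eq_mod (cj x (neg y)) (mt x (neg y))"
    using x y xy by (simp add: eq_mod_cj_mt)
  ultimately show ?thesis
    using x y by (simp add: eq_mod_neg)
qed

end

definition fractions :: "nat \<Rightarrow> real set" where
  "fractions N = {real k / real m | k m. 0 < m \<and> m \<le> N \<and> k \<le> m}"

lemma fractionsI: "0 < m \<Longrightarrow> m \<le> N \<Longrightarrow> k \<le> m \<Longrightarrow> real k / real m \<in> fractions N"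
  unfolding fractions_def by blast

lemma fractions_mono: "M \<le> N \<Longrightarrow> fractions M \<subseteq> fractions N"
  unfolding fractions_def by fastforce

text \<open>A finite subset \<open>S\<close> of a prime-filter quotient, closed under negation, is a finite
  chain with an order-reversing involution. Ranking its elements from both ends embeds it
  into the rationals so that \<open>neg\<close> becomes \<open>\<lambda>r. 1 - r\<close>.\<close>

locale nm_chain_embedding = nm_prime_filter +
  fixes S :: "'a set"
  assumes finite_S: "finite S" and S_subset: "S \<subseteq> A" and bt_S: "bt \<in> S"
    and neg_S: "s \<in> S \<Longrightarrow> neg s \<in> S"
begin

definition lt_mod :: "'a \<Rightarrow> 'a \<Rightarrow> bool" where
  "lt_mod x y \<longleftrightarrow> \<not> le_mod y x"

definition rank_below :: "'a \<Rightarrow> nat" where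
  "rank_below s = card {t \<in> S. lt_mod t s}"

definition rank_above :: "'a \<Rightarrow> nat" where
  "rank_above s = card {t \<in> S. lt_mod s t}"

definition K :: nat where
  "K = rank_above bt"

definition emb :: "'a \<Rightarrow> real" where
  "emb s = (real (rank_below s) - real (rank_above s) + real K) / (2 * real K)"

lemma S_A: "s \<in> S \<Longrightarrow> s \<in> A"
  using S_subset by auto

lemma tp_S: "tp \<in> S"
  using neg_S[OF bt_S] by simp

lemma rank_below_mono: "s \<in> A \<Longrightarrow> s' \<in> A \<Longrightarrow> le_mod s s' \<Longrightarrow> rank_below s \<le> rank_below s'"
  unfolding rank_below_def lt_mod_def
  by (intro card_mono) (auto simp: finite_S dest: S_A intro: le_mod_trans)

lemma rank_above_antimono: "s \<in> A \<Longrightarrow> s' \<in> A \<Longrightarrow> le_mod s s' \<Longrightarrow> rank_above s' \<le> rank_above s"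
  unfolding rank_above_def lt_mod_def
  by (intro card_mono) (auto simp: finite_S dest: S_A intro: le_mod_trans)

lemma rank_below_strict_mono:
  assumes s: "s \<in> S" and s': "s' \<in> S" and ss': "lt_mod s s'"
  shows "rank_below s < rank_below s'"
proof -
  have "le_mod s s'"
    using ss' s s' le_mod_total unfolding lt_mod_def by (meson S_A)
  then have "{t \<in> S. lt_mod t s} \<subseteq> {t \<in> S. lt_mod t s'}"
    using s s' unfolding lt_mod_def by (auto dest: S_A intro: le_mod_trans)
  moreover have "s \<in> {t \<in> S. lt_mod t s'} - {t \<in> S. lt_mod t s}"
    using s ss' le_mod_refl by (simp add: lt_mod_def S_A)
  ultimately show ?thesis
    unfolding rank_below_def using finite_S by (metis (no_types, lifting) DiffD1 DiffD2
        finite_subset mem_Collect_eq psubsetI psubset_card_mono subsetI)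
qed

lemma rank_above_strict_antimono:
  assumes s: "s \<in> S" and s': "s' \<in> S" and ss': "lt_mod s s'"
  shows "rank_above s' < rank_above s"
proof -
  have "le_mod s s'"
    using ss' s s' le_mod_total unfolding lt_mod_def by (meson S_A)
  then have "{t \<in> S. lt_mod s' t} \<subseteq> {t \<in> S. lt_mod s t}"
    using s s' unfolding lt_mod_def by (auto dest: S_A intro: le_mod_trans)
  moreover have "s' \<in> {t \<in> S. lt_mod s t} - {t \<in> S. lt_mod s' t}"
    using s' ss' le_mod_refl by (simp add: lt_mod_def S_A)
  ultimately show ?thesis
    unfolding rank_above_def using finite_S by (metis (no_types, lifting) DiffD1 DiffD2
        finite_subset mem_Collect_eq psubsetI psubset_card_mono subsetI)
qed

lemma rank_below_neg:
  assumes s: "s \<in> S"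
  shows "rank_below (neg s) = rank_above s"
proof -
  have "{t \<in> S. lt_mod t (neg s)} = neg ` {u \<in> S. lt_mod s u}"
  proof (intro set_eqI iffI)
    fix t assume "t \<in> {t \<in> S. lt_mod t (neg s)}"
    then have "neg t \<in> {u \<in> S. lt_mod s u}" and "t = neg (neg t)"
      using s neg_S le_mod_neg_iff[of "neg s" t] by (auto simp: lt_mod_def S_A)
    then show "t \<in> neg ` {u \<in> S. lt_mod s u}" by blast
  next
    fix t assume "t \<in> neg ` {u \<in> S. lt_mod s u}"
    then show "t \<in> {t \<in> S. lt_mod t (neg s)}"
      using s neg_S le_mod_neg_iff by (auto simp: lt_mod_def S_A)
  qed
  moreover have "inj_on neg S"
    by (metis S_A inj_onI neg_neg)
  ultimately show ?thesis
    unfolding rank_below_def rank_above_def by (simp add: card_image inj_on_subset)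
qed

lemma rank_above_neg: "s \<in> S \<Longrightarrow> rank_above (neg s) = rank_below s"
  using rank_below_neg[of "neg s"] neg_S S_A by simp

lemma K_pos: "0 < K"
proof -
  have "tp \<in> {t \<in> S. lt_mod bt t}"
    using tp_S not_le_mod_tp_bt by (simp add: lt_mod_def)
  then show ?thesis
    unfolding K_def rank_above_def using finite_S by (auto simp: card_gt_0_iff)
qed

lemma rank_below_bt: "rank_below bt = 0"
proof -
  have "{t \<in> S. lt_mod t bt} = {}"
    by (auto simp: lt_mod_def bt_le_mod S_A)
  then show ?thesis
    unfolding rank_below_def by (metis card.empty)
qed

lemma emb_mono:
  assumes "s \<in> A" "s' \<in> A" "le_mod s s'"
  shows "emb s \<le> emb s'"
proof -
  have "rank_below s \<le> rank_below s'" "rank_above s' \<le> rank_above s"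
    using assms rank_below_mono rank_above_antimono by auto
  then show ?thesis
    unfolding emb_def using K_pos by (simp add: divide_right_mono)
qed

lemma emb_strict_mono:
  assumes "s \<in> S" "s' \<in> S" "lt_mod s s'"
  shows "emb s < emb s'"
proof -
  have "rank_below s < rank_below s'" "rank_above s' < rank_above s"
    using assms rank_below_strict_mono rank_above_strict_antimono by auto
  then show ?thesis
    unfolding emb_def using K_pos by (simp add: divide_strict_right_mono)
qed

lemma emb_le_iff: "s \<in> S \<Longrightarrow> s' \<in> S \<Longrightarrow> emb s \<le> emb s' \<longleftrightarrow> le_mod s s'"
  using emb_mono[of s s'] emb_strict_mono[of s' s] S_A unfolding lt_mod_def by force

lemma emb_neg: "s \<in> S \<Longrightarrow> emb (neg s) = 1 - emb s"
  unfolding emb_def using K_pos by (simp add: rank_below_neg rank_above_neg field_simps)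

lemma emb_bt: "emb bt = 0"
  unfolding emb_def K_def using K_pos by (simp add: rank_below_bt)

lemma emb_tp: "emb tp = 1"
  using emb_neg[OF bt_S] by (simp add: emb_bt)

lemma emb_in_fractions:
  assumes s: "s \<in> S"
  shows "emb s \<in> fractions (2 * card S)"
proof -
  have "0 \<le> emb s" and "emb s \<le> 1"
    using emb_mono[of bt s] emb_mono[of s tp] s bt_le_mod le_mod_tp emb_bt emb_tp by (auto simp: S_A)
  then have "rank_above s \<le> rank_below s + K" and "rank_below s \<le> rank_above s + K"
    unfolding emb_def using K_pos by (simp_all add: zero_le_divide_iff divide_le_eq)
  then have "emb s = real (rank_below s + K - rank_above s) / real (2 * K)"
    and "rank_below s + K - rank_above s \<le> 2 * K"
    unfolding emb_def by (simp_all add: of_nat_diff)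
  moreover have "K \<le> card S"
    unfolding K_def rank_above_def using finite_S by (simp add: card_mono)
  ultimately show ?thesis
    using K_pos fractionsI[of "2 * K" "2 * card S" "rank_below s + K - rank_above s"] by simp
qed

definition represents :: "'a \<Rightarrow> real \<Rightarrow> bool" where
  "represents x r \<longleftrightarrow> x \<in> A \<and> (\<exists>s\<in>S. eq_mod x s \<and> emb s = r)"

lemma represents_S: "s \<in> S \<Longrightarrow> represents s (emb s)"
  unfolding represents_def using S_A eq_mod_refl by blast

lemma represents_eq_mod:
  "represents x r \<Longrightarrow> y \<in> A \<Longrightarrow> eq_mod y x \<Longrightarrow> represents y r"
  unfolding represents_def by (meson S_A eq_mod_trans)

lemma represents_le_mod_iff:
  assumes "represents x r" and "represents y r'"
  shows "le_mod x y \<longleftrightarrow> r \<le> r'"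
proof -
  obtain s s' where "x \<in> A" "y \<in> A" "s \<in> S" "s' \<in> S" "eq_mod x s" "eq_mod y s'"
    and "r = emb s" "r' = emb s'"
    using assms unfolding represents_def by blast
  then show ?thesis
    unfolding eq_mod_def by (meson S_A emb_le_iff le_mod_trans)
qed

lemma represents_closed: "represents x r \<Longrightarrow> x \<in> A"
  by (simp add: represents_def)

lemma represents_neg:
  assumes "represents x r"
  shows "represents (neg x) (1 - r)"
proof -
  obtain s where "x \<in> A" "s \<in> S" "eq_mod x s" "r = emb s"
    using assms unfolding represents_def by blast
  then show ?thesis
    unfolding represents_def
    by (intro conjI bexI[of _ "neg s"]) (simp_all add: neg_S emb_neg eq_mod_neg S_A)
qed

lemma represents_mt:
  assumes x: "represents x r" and y: "represents y r'"
  shows "represents (mt x y) (min r r')"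
proof -
  have A: "x \<in> A" "y \<in> A"
    using x y by (simp_all add: represents_closed)
  show ?thesis
  proof (cases "r \<le> r'")
    case True
    then have "eq_mod (mt x y) x"
      using A represents_le_mod_iff[OF x y] by (simp add: eq_mod_mt)
    then show ?thesis
      using True A x by (simp add: represents_eq_mod)
  next
    case False
    then have "eq_mod (mt y x) y"
      using A represents_le_mod_iff[OF y x] by (simp add: eq_mod_mt)
    then show ?thesis
      using False A y by (simp add: represents_eq_mod mt_comm)
  qed
qed

lemma represents_jn:
  assumes x: "represents x r" and y: "represents y r'"
  shows "represents (jn x y) (max r r')"
proof -
  have A: "x \<in> A" "y \<in> A"
    using x y by (simp_all add: represents_closed)
  show ?thesis
  proof (cases "r \<le> r'")
    case True
    then have "eq_mod (jn x y) y"
      using A represents_le_mod_iff[OF x y] by (simp add: eq_mod_jn)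
    then show ?thesis
      using True A y by (simp add: represents_eq_mod)
  next
    case False
    then have "eq_mod (jn y x) x"
      using A represents_le_mod_iff[OF y x] by (simp add: eq_mod_jn)
    then show ?thesis
      using False A x by (simp add: represents_eq_mod jn_comm)
  qed
qed

lemma represents_cj:
  assumes x: "represents x r" and y: "represents y r'"
  shows "represents (cj x y) (std_conj r r')"
proof -
  have A: "x \<in> A" "y \<in> A"
    using x y by (simp_all add: represents_closed)
  have iff: "le_mod x (neg y) \<longleftrightarrow> r + r' \<le> 1"
    using represents_le_mod_iff[OF x represents_neg[OF y]] by linarith
  show ?thesis
  proof (cases "r + r' > 1")
    case True
    then have "eq_mod (cj x y) (mt x y)"
      using A iff by (simp add: eq_mod_cj_mt)
    then show ?thesis
      using True A represents_mt[OF x y] by (simp add: std_conj_def represents_eq_mod)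
  next
    case False
    then have "eq_mod (cj x y) bt"
      using A iff by (simp add: eq_mod_cj_bt)
    then show ?thesis
      using False A represents_S[OF bt_S] by (simp add: std_conj_def emb_bt represents_eq_mod)
  qed
qed

lemma represents_im:
  assumes x: "represents x r" and y: "represents y r'"
  shows "represents (im x y) (std_imp r r')"
proof -
  have A: "x \<in> A" "y \<in> A"
    using x y by (simp_all add: represents_closed)
  show ?thesis
  proof (cases "r \<le> r'")
    case True
    then have "eq_mod (im x y) tp"
      using A represents_le_mod_iff[OF x y] by (simp add: eq_mod_im_tp)
    then show ?thesis
      using True A represents_S[OF tp_S] by (simp add: std_imp_def emb_tp represents_eq_mod)
  next
    case False
    then have "eq_mod (im x y) (neg (mt x (neg y)))"
      using A represents_le_mod_iff[OF x y] by (simp add: eq_mod_im_neg)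
    moreover have "represents (neg (mt x (neg y))) (1 - min r (1 - r'))"
      by (intro represents_neg represents_mt x represents_neg y)
    moreover have "1 - min r (1 - r') = std_imp r r'"
      using False by (simp add: std_imp_def)
    ultimately show ?thesis
      using A by (metis represents_eq_mod closed(4))
  qed
qed

lemma represents_eval:
  "(\<And>i. i \<in> vars \<phi> \<Longrightarrow> v i \<in> S) \<Longrightarrow>
    represents (eval_alg mt jn cj im bt tp v \<phi>) (eval_std (\<lambda>i. emb (v i)) \<phi>)"
proof (induction \<phi>)
  case Bot
  then show ?case using represents_S[OF bt_S] by (simp add: emb_bt)
next
  case Top
  then show ?case using represents_S[OF tp_S] by (simp add: emb_tp)
qed (auto simp: represents_S represents_mt represents_jn represents_cj represents_im)

end
lemma card_neg_closure_le:
  "card ({a, b} \<union> v ` {..<n} \<union> f ` v ` {..<n}) \<le> 2 * n + 2"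
proof -
  have "card ({a, b} \<union> v ` {..<n} \<union> f ` v ` {..<n})
      \<le> card {a, b} + card (v ` {..<n}) + card (f ` v ` {..<n})"
    by (meson add_mono card_Un_le le_refl order_trans)
  moreover have "card (f ` v ` {..<n}) \<le> card (v ` {..<n})" "card (v ` {..<n}) \<le> n"
    using card_image_le[of "{..<n}" v] card_image_le[of "v ` {..<n}" f] by simp_all
  moreover have "card {a, b} \<le> 2"
    by (simp add: card_insert_le_m1)
  ultimately show ?thesis by linarith
qed

context nm_alg begin

text \<open>The bound \<open>4n + 4\<close> is \<open>2 card S\<close> for \<open>S\<close> the values of the variables, their negations,
  \<open>bt\<close> and \<open>tp\<close>.\<close>

lemma completeness_le:
  assumes v: "\<And>i. v i \<in> A" and \<phi>: "vars \<phi> \<subseteq> {..<n}" and \<psi>: "vars \<psi> \<subseteq> {..<n}"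
    and agree: "\<And>\<mu>. (\<And>i. \<mu> i \<in> fractions (4 * n + 4)) \<Longrightarrow> eval_std \<mu> \<phi> = eval_std \<mu> \<psi>"
  shows "le (eval_alg mt jn cj im bt tp v \<phi>) (eval_alg mt jn cj im bt tp v \<psi>)"
proof (rule ccontr)
  define x where "x = eval_alg mt jn cj im bt tp v \<phi>"
  define y where "y = eval_alg mt jn cj im bt tp v \<psi>"
  have x: "x \<in> A" and y: "y \<in> A"
    unfolding x_def y_def using v by (simp_all add: eval_alg_closed)
  assume "\<not> le (eval_alg mt jn cj im bt tp v \<phi>) (eval_alg mt jn cj im bt tp v \<psi>)"
  then obtain F where F: "is_filter F" "im x y \<notin> F"
    and prime: "\<And>a b. a \<in> A \<Longrightarrow> b \<in> A \<Longrightarrow> im a b \<in> F \<or> im b a \<in> F"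
    using prime_filter_omitting[of "im x y"] x y by (auto simp: le_iff_im_tp x_def y_def)
  then have "bt \<notin> F"
    using x y bt_le unfolding is_filter_def by (meson closed(4))
  define S where "S = {bt, tp} \<union> v ` {..<n} \<union> neg ` v ` {..<n}"
  interpret C: nm_chain_embedding A mt jn cj im bt tp F S
    using F prime \<open>bt \<notin> F\<close> v by unfold_locales (auto simp: S_def)
  define w where "w i = (if i < n then v i else bt)" for i
  have w: "w i \<in> S" for i
    by (simp add: w_def S_def)
  have "2 * card S \<le> 4 * n + 4"
    using card_neg_closure_le[of bt tp v n neg] unfolding S_def by linarith
  then have "C.emb (w i) \<in> fractions (4 * n + 4)" for i
    using C.emb_in_fractions[OF w] fractions_mono by blast
  then have "eval_std (\<lambda>i. C.emb (w i)) \<phi> = eval_std (\<lambda>i. C.emb (w i)) \<psi>"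
    by (rule agree)
  moreover have "eval_alg mt jn cj im bt tp w \<phi> = x" and "eval_alg mt jn cj im bt tp w \<psi> = y"
    unfolding x_def y_def using \<phi> \<psi> by (auto simp: w_def intro!: eval_alg_cong)
  then have "C.represents x (eval_std (\<lambda>i. C.emb (w i)) \<phi>)"
    and "C.represents y (eval_std (\<lambda>i. C.emb (w i)) \<psi>)"
    using C.represents_eval[of \<phi> w] C.represents_eval[of \<psi> w] w by auto
  ultimately have "C.le_mod x y"
    by (simp add: C.represents_le_mod_iff)
  then show False
    using F(2) by (simp add: C.le_mod_def)
qed

lemma completeness:
  assumes "\<And>i. v i \<in> A" and "vars \<phi> \<subseteq> {..<n}" and "vars \<psi> \<subseteq> {..<n}"
    and "\<And>\<mu>. (\<And>i. \<mu> i \<in> fractions (4 * n + 4)) \<Longrightarrow> eval_std \<mu> \<phi> = eval_std \<mu> \<psi>"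
  shows "eval_alg mt jn cj im bt tp v \<phi> = eval_alg mt jn cj im bt tp v \<psi>"
  using completeness_le[of v \<phi> n \<psi>] completeness_le[of v \<psi> n \<phi>] assms
  by (metis eval_alg_closed le_antisym)

end

section \<open>Soundness for finite standard subalgebras\<close>

lemma nm_algebra_image:
  assumes nm: "nm_algebra Q mt jn cj im bt tp" and inj: "inj_on f Q"
  defines "g \<equiv> inv_into Q f"
  shows "nm_algebra (f ` Q) (\<lambda>a b. f (mt (g a) (g b))) (\<lambda>a b. f (jn (g a) (g b)))
     (\<lambda>a b. f (cj (g a) (g b))) (\<lambda>a b. f (im (g a) (g b))) (f bt) (f tp)"
proof -
  interpret nm_alg Q mt jn cj im bt tp
    using nm by unfold_locales
  have [simp]: "x \<in> Q \<Longrightarrow> g (f x) = x" for x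
    unfolding g_def using inj by (simp add: inv_into_f_f)
  have [simp]: "x \<in> Q \<Longrightarrow> y \<in> Q \<Longrightarrow> f x = f y \<longleftrightarrow> x = y" for x y
    using inj by (simp add: inj_on_eq_iff)
  show ?thesis
    unfolding nm_algebra_def
    by (intro conjI ballI; (elim imageE)?; simp;
        (rule mt_comm jn_comm cj_comm mt_assoc jn_assoc cj_assoc mt_jn_absorb jn_mt_absorb jn_bt
          mt_tp cj_tp residuation_eq prelinearity nm_axiom im_bt_involutive; assumption))
qed

lemma eval_alg_image:
  assumes nm: "nm_algebra Q mt jn cj im bt tp" and inj: "inj_on f Q" and v: "\<And>i. v i \<in> Q"
  defines "g \<equiv> inv_into Q f"
  shows "eval_alg (\<lambda>a b. f (mt (g a) (g b))) (\<lambda>a b. f (jn (g a) (g b)))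
      (\<lambda>a b. f (cj (g a) (g b))) (\<lambda>a b. f (im (g a) (g b))) (f bt) (f tp) (\<lambda>i. f (v i)) \<phi>
    = f (eval_alg mt jn cj im bt tp v \<phi>)"
proof -
  interpret nm_alg Q mt jn cj im bt tp
    using nm by unfold_locales
  have [simp]: "x \<in> Q \<Longrightarrow> g (f x) = x" for x
    unfolding g_def using inj by (simp add: inv_into_f_f)
  show ?thesis
    by (induction \<phi>) (simp_all add: v eval_alg_closed)
qed

text \<open>\<open>\<equiv>\<^sub>N\<^sub>M\<close> only quantifies over algebras carried by sets of naturals; a finite algebra
  is brought into that form by transport along an injection into \<open>nat\<close>.\<close>

lemma nm_equiv_imp_eval_alg_eq:
  assumes nm: "nm_algebra Q mt jn cj im bt tp" and "finite Q" and "\<phi> \<equiv>\<^sub>N\<^sub>M \<psi>"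
    and v: "\<And>i. v i \<in> Q"
  shows "eval_alg mt jn cj im bt tp v \<phi> = eval_alg mt jn cj im bt tp v \<psi>"
proof -
  obtain f :: "'a \<Rightarrow> nat" where inj: "inj_on f Q"
    using \<open>finite Q\<close> finite_imp_inj_to_nat_seg by blast
  have equiv: "\<And>(B :: nat set) mt jn cj im bt tp w. nm_algebra B mt jn cj im bt tp \<Longrightarrow>
      \<forall>i. w i \<in> B \<Longrightarrow> eval_alg mt jn cj im bt tp w \<phi> = eval_alg mt jn cj im bt tp w \<psi>"
    using \<open>\<phi> \<equiv>\<^sub>N\<^sub>M \<psi>\<close> unfolding nm_equiv_def by blast
  have "f (eval_alg mt jn cj im bt tp v \<phi>) = f (eval_alg mt jn cj im bt tp v \<psi>)"
    unfolding eval_alg_image[OF nm inj v, symmetric]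
    using equiv[OF nm_algebra_image[OF nm inj]] v by simp
  moreover have "eval_alg mt jn cj im bt tp v \<phi> \<in> Q" "eval_alg mt jn cj im bt tp v \<psi> \<in> Q"
    using nm_alg.eval_alg_closed[of Q] nm v by (simp_all add: nm_alg_def)
  ultimately show ?thesis
    using inj by (simp add: inj_on_eq_iff)
qed

lemma nm_algebra_std_subalgebra:
  fixes Q :: "real set"
  assumes "Q \<subseteq> {0..1}" and "0 \<in> Q" and "1 \<in> Q"
    and "\<And>x y. x \<in> Q \<Longrightarrow> y \<in> Q \<Longrightarrow> min x y \<in> Q \<and> max x y \<in> Q \<and> std_conj x y \<in> Q \<and> std_imp x y \<in> Q"
  shows "nm_algebra Q min max std_conj std_imp 0 1"
  using assms unfolding nm_algebra_def
  by (auto simp: std_conj_def std_imp_def min_def max_def subset_iff)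

lemma finite_fractions: "finite (fractions N)"
proof -
  have "fractions N \<subseteq> (\<lambda>(k, m). real k / real m) ` ({..N} \<times> {..N})"
    unfolding fractions_def by (auto intro!: image_eqI[of _ _ "(k, m)" for k m])
  then show ?thesis
    using finite_subset by blast
qed

lemma fractions_subset_unit_interval: "fractions N \<subseteq> {0..1}"
  unfolding fractions_def by (auto simp: divide_le_eq_1)

lemma zero_in_fractions: "1 \<le> N \<Longrightarrow> 0 \<in> fractions N"
  using fractionsI[of 1 N 0] by simp
lemma one_in_fractions: "1 \<le> N \<Longrightarrow> 1 \<in> fractions N"
  using fractionsI[of 1 N 1] by simp
lemma half_in_fractions: "2 \<le> N \<Longrightarrow> 1/2 \<in> fractions N"
  using fractionsI[of 2 N 1] by simp

lemma one_minus_in_fractions: "x \<in> fractions N \<Longrightarrow> 1 - x \<in> fractions N"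
proof -
  assume "x \<in> fractions N"
  then obtain k m where "x = real k / real m" "0 < m" "m \<le> N" "k \<le> m"
    unfolding fractions_def by blast
  moreover from this have "1 - x = real (m - k) / real m"
    by (simp add: of_nat_diff field_simps)
  ultimately show ?thesis
    using fractionsI[of m N "m - k"] by simp
qed

lemma nm_algebra_fractions: "1 \<le> N \<Longrightarrow> nm_algebra (fractions N) min max std_conj std_imp 0 1"
  by (intro nm_algebra_std_subalgebra fractions_subset_unit_interval)
    (auto simp: min_def max_def std_conj_def std_imp_def zero_in_fractions one_in_fractions
      one_minus_in_fractions)

lemma eval_std_in_fractions:
  "1 \<le> N \<Longrightarrow> (\<And>i. i \<in> vars \<phi> \<Longrightarrow> \<mu> i \<in> fractions N) \<Longrightarrow> eval_std \<mu> \<phi> \<in> fractions N"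
  by (induction \<phi>) (auto simp: min_def max_def std_conj_def std_imp_def zero_in_fractions
      one_in_fractions one_minus_in_fractions)

lemma eval_std_range: "(\<And>i. i \<in> vars \<phi> \<Longrightarrow> \<mu> i \<in> {0..1}) \<Longrightarrow> eval_std \<mu> \<phi> \<in> {0..1}"
  by (induction \<phi>) (auto simp: std_conj_def std_imp_def)

section \<open>Equivalence of formulas as agreement on fractions\<close>

definition agree :: "nat \<Rightarrow> form \<Rightarrow> form \<Rightarrow> bool" where
  "agree n \<phi> \<psi> \<longleftrightarrow> (\<forall>\<mu>. (\<forall>i. \<mu> i \<in> fractions (4 * n + 4)) \<longrightarrow> eval_std \<mu> \<phi> = eval_std \<mu> \<psi>)"

lemma nm_equiv_iff_agree:
  assumes "\<phi> \<in> Fm n" and "\<psi> \<in> Fm n"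
  shows "\<phi> \<equiv>\<^sub>N\<^sub>M \<psi> \<longleftrightarrow> agree n \<phi> \<psi>"
proof
  assume "\<phi> \<equiv>\<^sub>N\<^sub>M \<psi>"
  then show "agree n \<phi> \<psi>"
    unfolding agree_def eval_std_def
    using nm_equiv_imp_eval_alg_eq[OF nm_algebra_fractions[of "4 * n + 4", simplified] finite_fractions]
    by simp
next
  assume agree: "agree n \<phi> \<psi>"
  show "\<phi> \<equiv>\<^sub>N\<^sub>M \<psi>"
    unfolding nm_equiv_def
  proof (intro allI impI)
    fix B :: "nat set" and mt jn cj im bt tp and v :: "nat \<Rightarrow> nat"
    assume "nm_algebra B mt jn cj im bt tp" and "\<forall>i. v i \<in> B"
    then show "eval_alg mt jn cj im bt tp v \<phi> = eval_alg mt jn cj im bt tp v \<psi>"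
      using nm_alg.completeness[of B mt jn cj im bt tp v \<phi> n \<psi>] assms agree
      unfolding agree_def Fm_def nm_alg_def by blast
  qed
qed

lemma cls_eq_iff_agree:
  assumes "\<phi> \<in> Fm n" and "\<psi> \<in> Fm n"
  shows "cls n \<phi> = cls n \<psi> \<longleftrightarrow> agree n \<phi> \<psi>"
proof -
  have "cls n \<chi> = {\<theta> \<in> Fm n. agree n \<theta> \<chi>}" if "\<chi> \<in> Fm n" for \<chi>
    unfolding cls_def using nm_equiv_iff_agree that by blast
  then show ?thesis
    using assms unfolding agree_def by (auto simp: set_eq_iff) metis+
qed

lemma agree_imp_eval_eq:
  assumes "agree n \<phi> \<psi>" and "\<phi> \<in> Fm n" and "\<psi> \<in> Fm n"
    and \<mu>: "\<And>i. i < n \<Longrightarrow> \<mu> i \<in> fractions (4 * n + 4)"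
  shows "eval_std \<mu> \<phi> = eval_std \<mu> \<psi>"
proof -
  define \<mu>' where "\<mu>' i = (if i < n then \<mu> i else 0)" for i
  have "eval_std \<mu>' \<phi> = eval_std \<mu>' \<psi>"
    using assms \<mu> zero_in_fractions[of "4 * n + 4"] unfolding agree_def \<mu>'_def by simp
  moreover have "eval_std \<mu>' \<chi> = eval_std \<mu> \<chi>" if "\<chi> \<in> Fm n" for \<chi>
    using that by (intro eval_std_cong) (auto simp: \<mu>'_def Fm_def)
  ultimately show ?thesis
    using assms by simp
qed

lemma agree_iff_PiE:
  assumes "\<phi> \<in> Fm n" and "\<psi> \<in> Fm n"
  shows "agree n \<phi> \<psi> \<longleftrightarrow>
    (\<forall>\<mu> \<in> {..<n} \<rightarrow>\<^sub>E fractions (4 * n + 4). eval_std \<mu> \<phi> = eval_std \<mu> \<psi>)"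
proof
  assume "agree n \<phi> \<psi>"
  then show "\<forall>\<mu> \<in> {..<n} \<rightarrow>\<^sub>E fractions (4 * n + 4). eval_std \<mu> \<phi> = eval_std \<mu> \<psi>"
    using agree_imp_eval_eq assms by (auto simp: PiE_def Pi_def)
next
  assume PiE: "\<forall>\<mu> \<in> {..<n} \<rightarrow>\<^sub>E fractions (4 * n + 4). eval_std \<mu> \<phi> = eval_std \<mu> \<psi>"
  have restrict: "eval_std (restrict \<mu> {..<n}) \<chi> = eval_std \<mu> \<chi>" if "\<chi> \<in> Fm n" for \<mu> \<chi>
    using that by (intro eval_std_cong) (auto simp: Fm_def)
  show "agree n \<phi> \<psi>"
    unfolding agree_def
  proof (intro allI impI)
    fix \<mu> :: "nat \<Rightarrow> real"
    assume "\<forall>i. \<mu> i \<in> fractions (4 * n + 4)"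
    then have "eval_std (restrict \<mu> {..<n}) \<phi> = eval_std (restrict \<mu> {..<n}) \<psi>"
      using PiE by (simp add: restrict_PiE_iff)
    then show "eval_std \<mu> \<phi> = eval_std \<mu> \<psi>"
      using restrict assms by simp
  qed
qed

lemma three_valued_in_fractions:
  assumes "\<mu> \<in> {..<n} \<rightarrow>\<^sub>E {0, 1/2, 1}" and "i < n"
  shows "\<mu> i \<in> fractions (4 * n + 4)"
proof -
  have "\<mu> i \<in> {0, 1/2, 1}"
    using assms by (auto simp: PiE_def Pi_def)
  moreover have "{0, 1/2, 1} \<subseteq> fractions (4 * n + 4)"
    using zero_in_fractions one_in_fractions half_in_fractions by simp
  ultimately show ?thesis
    by blast
qed

lemma eval_std_three_valued_range:
  "\<phi> \<in> Fm n \<Longrightarrow> \<mu> \<in> {..<n} \<rightarrow>\<^sub>E {0, 1/2, 1} \<Longrightarrow> eval_std \<mu> \<phi> \<in> {0..1}"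
  by (intro eval_std_range) (auto simp: Fm_def PiE_def Pi_def)

section \<open>Counting three-valued models\<close>

definition models3 :: "nat \<Rightarrow> form \<Rightarrow> (nat \<Rightarrow> real) set" where
  "models3 n \<phi> = {\<mu> \<in> {..<n} \<rightarrow>\<^sub>E {0, 1/2, 1}. eval_std \<mu> \<phi> = 1}"

lemma finite_models3: "finite (models3 n \<phi>)"
proof -
  have "finite ({..<n} \<rightarrow>\<^sub>E {0, 1/2, 1 :: real})"
    by (intro finite_PiE) auto
  then show ?thesis
    unfolding models3_def by simp
qed

lemma models3_agree:
  assumes "agree n \<phi> \<psi>" and "\<phi> \<in> Fm n" and "\<psi> \<in> Fm n"
  shows "models3 n \<phi> = models3 n \<psi>"
proof -
  have "eval_std \<mu> \<phi> = eval_std \<mu> \<psi>" if "\<mu> \<in> {..<n} \<rightarrow>\<^sub>E {0, 1/2, 1}" for \<mu>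
    using agree_imp_eval_eq[OF assms] three_valued_in_fractions[OF that] by blast
  then show ?thesis
    unfolding models3_def by auto
qed

lemma card_models3_Or_And:
  assumes "\<phi> \<in> Fm n" and "\<psi> \<in> Fm n"
  shows "card (models3 n \<phi>) + card (models3 n \<psi>) =
    card (models3 n (Or \<phi> \<psi>)) + card (models3 n (And \<phi> \<psi>))"
proof -
  have "models3 n (Or \<phi> \<psi>) = models3 n \<phi> \<union> models3 n \<psi>"
    and "models3 n (And \<phi> \<psi>) = models3 n \<phi> \<inter> models3 n \<psi>"
    unfolding models3_def using eval_std_three_valued_range assms
    by (auto simp: max_def min_def dest: order_antisym)
  then show ?thesis
    using card_Un_Int[OF finite_models3 finite_models3] by simp
qed

definition count_val :: "nat \<Rightarrow> form set \<Rightarrow> real" where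
  "count_val n X =
    (if X \<in> NM_free n then real (card (models3 n (SOME \<phi>. \<phi> \<in> Fm n \<and> X = cls n \<phi>))) else 0)"

lemma count_val_cls:
  assumes \<phi>: "\<phi> \<in> Fm n"
  shows "count_val n (cls n \<phi>) = real (card (models3 n \<phi>))"
proof -
  define \<phi>' where "\<phi>' = (SOME \<phi>'. \<phi>' \<in> Fm n \<and> cls n \<phi> = cls n \<phi>')"
  have "\<phi>' \<in> Fm n \<and> cls n \<phi> = cls n \<phi>'"
    unfolding \<phi>'_def by (rule someI[of _ \<phi>]) (simp add: \<phi>)
  then have "models3 n \<phi>' = models3 n \<phi>"
    using \<phi> cls_eq_iff_agree models3_agree by metis
  moreover have "cls n \<phi> \<in> NM_free n"
    using \<phi> unfolding NM_free_def by blast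
  then have "count_val n (cls n \<phi>) = real (card (models3 n \<phi>'))"
    unfolding count_val_def \<phi>'_def by (rule if_P)
  ultimately show ?thesis
    by simp
qed

lemma count_val_outside: "X \<notin> NM_free n \<Longrightarrow> count_val n X = 0"
  by (simp add: count_val_def)

lemma is_valuation_count_val: "is_valuation n (count_val n)"
  unfolding is_valuation_def
  by (metis (no_types, lifting) Fm_simps(4,5) card_models3_Or_And count_val_cls of_nat_add)

lemma count_val_Bot: "count_val n (cls n Bot) = 0"
  by (simp add: count_val_cls models3_def)

section \<open>Join-irreducible classes\<close>

lemma join_irreducible_below_imp:
  assumes ji: "join_irreducible n (cls n g)" and g: "g \<in> Fm n" and p: "p \<in> Fm n" and q: "q \<in> Fm n"
  obtains "\<And>\<mu>. (\<And>i. i < n \<Longrightarrow> \<mu> i \<in> fractions (4 * n + 4)) \<Longrightarrow>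
      eval_std \<mu> g \<le> std_imp (eval_std \<mu> p) (eval_std \<mu> q)"
    | "\<And>\<mu>. (\<And>i. i < n \<Longrightarrow> \<mu> i \<in> fractions (4 * n + 4)) \<Longrightarrow>
      eval_std \<mu> g \<le> std_imp (eval_std \<mu> q) (eval_std \<mu> p)"
proof -
  have "eval_std \<mu> g \<le> 1" if "\<forall>i. \<mu> i \<in> fractions (4 * n + 4)" for \<mu>
    using that eval_std_range[of g \<mu>] fractions_subset_unit_interval by (auto simp: subset_iff)
  then have "agree n g (Or (And g (Imp p q)) (And g (Imp q p)))"
    unfolding agree_def by (auto simp: std_imp_def)
  then have "cls n g = cls n (Or (And g (Imp p q)) (And g (Imp q p)))"
    using g p q by (simp add: cls_eq_iff_agree)
  then have "cls n g = cls n (And g (Imp p q)) \<or> cls n g = cls n (And g (Imp q p))"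
    using ji g p q unfolding join_irreducible_def by simp
  then have "agree n g (And g (Imp p q)) \<or> agree n g (And g (Imp q p))"
    using g p q by (simp add: cls_eq_iff_agree)
  moreover have "eval_std \<mu> g \<le> std_imp (eval_std \<mu> a) (eval_std \<mu> b)"
    if "agree n g (And g (Imp a b))" "a \<in> Fm n" "b \<in> Fm n"
      and "\<And>i. i < n \<Longrightarrow> \<mu> i \<in> fractions (4 * n + 4)" for a b \<mu>
    using agree_imp_eval_eq[of n g "And g (Imp a b)" \<mu>] g that by simp
  ultimately show ?thesis
    using that p q by blast
qed

lemma separating_formula:
  assumes "a \<in> {0, 1/2, 1}" and "c \<in> {0, 1/2, 1}" and "a < c"
  obtains p where "vars p \<subseteq> {i}"
    and "\<And>\<mu>. \<mu> i = a \<Longrightarrow> eval_std \<mu> p < 1 - a"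
    and "\<And>\<mu>. \<mu> i = c \<Longrightarrow> 1 - c < eval_std \<mu> p"
proof -
  consider "a = 0" "c = 1/2" | "a = 0" "c = 1" | "a = 1/2" "c = 1"
    using assms by auto
  then show ?thesis
  proof cases
    case 1
    then show ?thesis
      by (intro that[of "Imp (Conj (Imp (Var i) Bot) (Imp (Var i) Bot)) Bot"])
        (auto simp: std_conj_def std_imp_def)
  next
    case 2
    then show ?thesis
      by (intro that[of "Var i"]) auto
  next
    case 3
    then show ?thesis
      by (intro that[of "Conj (Var i) (Var i)"]) (auto simp: std_conj_def)
  qed
qed

lemma card_models3_join_irreducible_le_1:
  assumes ji: "join_irreducible n (cls n g)" and g: "g \<in> Fm n"
  shows "card (models3 n g) \<le> 1"
proof (rule ccontr)
  assume "\<not> card (models3 n g) \<le> 1"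
  then obtain \<mu>1 \<mu>2 where "\<mu>1 \<in> models3 n g" "\<mu>2 \<in> models3 n g" "\<mu>1 \<noteq> \<mu>2"
    using card_le_Suc0_iff_eq[OF finite_models3] by auto
  moreover from this obtain i where "i < n" "\<mu>1 i \<noteq> \<mu>2 i"
    unfolding models3_def by (metis (no_types, lifting) PiE_ext lessThan_iff mem_Collect_eq)
  ultimately obtain \<mu>a \<mu>c where a: "\<mu>a \<in> models3 n g" and c: "\<mu>c \<in> models3 n g"
    and i: "i < n" and ac: "\<mu>a i < \<mu>c i"
    by (metis linorder_neqE)
  have range: "\<mu> i \<in> {0, 1/2, 1}" "\<And>j. j < n \<Longrightarrow> \<mu> j \<in> fractions (4 * n + 4)"
    if "\<mu> \<in> models3 n g" for \<mu>
    using that i three_valued_in_fractions unfolding models3_def by (auto simp: PiE_def Pi_def)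
  obtain p where p: "vars p \<subseteq> {i}" and pa: "eval_std \<mu>a p < 1 - \<mu>a i"
    and pc: "1 - \<mu>c i < eval_std \<mu>c p"
    using separating_formula[OF range(1)[OF a] range(1)[OF c] ac] by metis
  define q where "q = Imp (Var i) Bot"
  have q: "eval_std \<mu> q = 1 - \<mu> i" if "\<mu> \<in> models3 n g" for \<mu>
    using range(1)[OF that] by (auto simp: q_def std_imp_def)
  have pF: "p \<in> Fm n"
    using p i by (auto simp: Fm_def)
  have qF: "q \<in> Fm n"
    unfolding q_def using i by (simp only: Fm_simps simp_thms)
  have "eval_std \<mu>a g = 1" "eval_std \<mu>c g = 1"
    using a c by (simp_all add: models3_def)
  from join_irreducible_below_imp[OF ji g pF qF] show False
  proof cases
    case 1
    then have "1 \<le> std_imp (eval_std \<mu>c p) (eval_std \<mu>c q)"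
      using range(2)[OF c] \<open>eval_std \<mu>c g = 1\<close> by metis
    then show False
      using pc q[OF c] ac range(1)[OF a] range(1)[OF c] by (auto simp: std_imp_def)
  next
    case 2
    then have "1 \<le> std_imp (eval_std \<mu>a q) (eval_std \<mu>a p)"
      using range(2)[OF a] \<open>eval_std \<mu>a g = 1\<close> by metis
    then show False
      using pa q[OF a] ac range(1)[OF a] range(1)[OF c] by (auto simp: std_imp_def)
  qed
qed

lemma idempotent_cls_iff:
  assumes g: "g \<in> Fm n"
  shows "idempotent_cls n (cls n g) \<longleftrightarrow> agree n (Conj g g) g"
proof
  assume "idempotent_cls n (cls n g)"
  then obtain \<phi> where "\<phi> \<in> Fm n" "agree n g \<phi>" "agree n (Conj \<phi> \<phi>) g"
    unfolding idempotent_cls_def using g by (metis Fm_simps(6) cls_eq_iff_agree)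
  then show "agree n (Conj g g) g"
    unfolding agree_def by auto
next
  assume "agree n (Conj g g) g"
  then have "cls n (Conj g g) = cls n g"
    using g by (simp add: cls_eq_iff_agree)
  then show "idempotent_cls n (cls n g)"
    unfolding idempotent_cls_def using g by blast
qed

definition round3 :: "real \<Rightarrow> real" where
  "round3 x = (if x > 1/2 then 1 else if x = 1/2 then 1/2 else 0)"

lemma eval_std_round3:
  assumes "\<And>i. i \<in> vars \<phi> \<Longrightarrow> \<mu> i \<in> {0..1}"
  shows "eval_std (\<lambda>i. round3 (\<mu> i)) \<phi> = round3 (eval_std \<mu> \<phi>)"
  using assms
proof (induction \<phi>)
  case (Conj a b)
  then show ?case
    using eval_std_range[of a \<mu>] eval_std_range[of b \<mu>]
    by (auto simp: round3_def std_conj_def min_def)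
next
  case (Imp a b)
  then show ?case
    using eval_std_range[of a \<mu>] eval_std_range[of b \<mu>]
    by (auto simp: round3_def std_imp_def max_def)
qed (auto simp: round3_def min_def max_def)

lemma models3_nonempty_if_idempotent:
  assumes ji: "join_irreducible n (cls n g)" and g: "g \<in> Fm n"
    and idem: "idempotent_cls n (cls n g)"
  shows "models3 n g \<noteq> {}"
proof -
  have "\<not> agree n g Bot"
    using ji g cls_eq_iff_agree unfolding join_irreducible_def by auto
  then obtain \<mu> where \<mu>: "\<forall>i. \<mu> i \<in> fractions (4 * n + 4)" and "eval_std \<mu> g \<noteq> 0"
    unfolding agree_def by auto
  moreover have "std_conj (eval_std \<mu> g) (eval_std \<mu> g) = eval_std \<mu> g"
    using idem \<mu> idempotent_cls_iff[OF g] unfolding agree_def by auto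
  ultimately have "eval_std \<mu> g > 1/2"
    unfolding std_conj_def by (auto split: if_splits)
  moreover have "\<mu> i \<in> {0..1}" for i
    using \<mu> fractions_subset_unit_interval by blast
  ultimately have "eval_std (\<lambda>i. round3 (\<mu> i)) g = 1"
    using eval_std_round3[of g \<mu>] by (simp add: round3_def)
  moreover have "eval_std (restrict (\<lambda>i. round3 (\<mu> i)) {..<n}) g = eval_std (\<lambda>i. round3 (\<mu> i)) g"
    using g by (intro eval_std_cong) (auto simp: Fm_def)
  moreover have "restrict (\<lambda>i. round3 (\<mu> i)) {..<n} \<in> {..<n} \<rightarrow>\<^sub>E {0, 1/2, 1}"
    by (simp add: round3_def)
  ultimately have "restrict (\<lambda>i. round3 (\<mu> i)) {..<n} \<in> models3 n g"
    unfolding models3_def by (simp del: restrict_PiE)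
  then show ?thesis
    by blast
qed

lemma models3_empty_if_not_idempotent:
  assumes ji: "join_irreducible n (cls n g)" and g: "g \<in> Fm n"
    and not_idem: "\<not> idempotent_cls n (cls n g)"
  shows "models3 n g = {}"
proof (rule ccontr)
  assume "models3 n g \<noteq> {}"
  then obtain \<mu> where \<mu>: "\<mu> \<in> {..<n} \<rightarrow>\<^sub>E {0, 1/2, 1}" and "eval_std \<mu> g = 1"
    unfolding models3_def by blast
  obtain \<nu> where \<nu>: "\<forall>i. \<nu> i \<in> fractions (4 * n + 4)"
    and "std_conj (eval_std \<nu> g) (eval_std \<nu> g) \<noteq> eval_std \<nu> g"
    using not_idem idempotent_cls_iff[OF g] unfolding agree_def by auto
  then have \<nu>_g: "eval_std \<nu> g \<noteq> 0" "eval_std \<nu> g + eval_std \<nu> g \<le> 1"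
    unfolding std_conj_def by (auto split: if_splits)
  have "eval_std \<nu> g \<in> {0..1}"
    using \<nu> fractions_subset_unit_interval by (intro eval_std_range) blast
  define s where "s = Conj g g"
  have "s \<in> Fm n" "Imp s Bot \<in> Fm n"
    using g by (simp_all add: s_def)
  from join_irreducible_below_imp[OF ji g this(2,1)] show False
  proof cases
    case 1
    then have "eval_std \<nu> g \<le> std_imp (eval_std \<nu> (Imp s Bot)) (eval_std \<nu> s)"
      using \<nu> by blast
    then show False
      using \<nu>_g \<open>eval_std \<nu> g \<in> {0..1}\<close> by (auto simp: s_def std_conj_def std_imp_def)
  next
    case 2
    then have "eval_std \<mu> g \<le> std_imp (eval_std \<mu> s) (eval_std \<mu> (Imp s Bot))"
      using \<mu> three_valued_in_fractions by blast
    then show False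
      using \<open>eval_std \<mu> g = 1\<close> by (simp add: s_def std_conj_def std_imp_def)
  qed
qed

lemma count_val_join_irreducible:
  assumes "join_irreducible n X"
  shows "count_val n X = (if idempotent_cls n X then 1 else 0)"
proof -
  obtain g where g: "g \<in> Fm n" and X: "X = cls n g"
    using assms unfolding join_irreducible_def NM_free_def by blast
  show ?thesis
    using assms g X card_models3_join_irreducible_le_1[of n g] finite_models3[of n g]
      models3_nonempty_if_idempotent[of n g] models3_empty_if_not_idempotent[of n g]
    by (auto simp: count_val_cls le_Suc_eq card_le_Suc0_iff_eq)
qed

section \<open>Uniqueness of the valuation\<close>

definition graph_area :: "nat \<Rightarrow> form \<Rightarrow> nat" where
  "graph_area n \<phi> = card (SIGMA \<mu>:{..<n} \<rightarrow>\<^sub>E fractions (4 * n + 4).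
     {r \<in> fractions (4 * n + 4). r \<le> eval_std \<mu> \<phi>})"

lemma graph_area_less:
  assumes \<phi>: "\<phi> \<in> Fm n" and \<psi>: "\<psi> \<in> Fm n"
    and le: "\<And>\<mu>. \<mu> \<in> {..<n} \<rightarrow>\<^sub>E fractions (4 * n + 4) \<Longrightarrow> eval_std \<mu> \<psi> \<le> eval_std \<mu> \<phi>"
    and not_agree: "\<not> agree n \<psi> \<phi>"
  shows "graph_area n \<psi> < graph_area n \<phi>"
proof -
  let ?G = "\<lambda>\<chi>. SIGMA \<mu>:{..<n} \<rightarrow>\<^sub>E fractions (4 * n + 4). {r \<in> fractions (4 * n + 4). r \<le> eval_std \<mu> \<chi>}"
  obtain \<mu> where \<mu>: "\<mu> \<in> {..<n} \<rightarrow>\<^sub>E fractions (4 * n + 4)" and "eval_std \<mu> \<psi> \<noteq> eval_std \<mu> \<phi>"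
    using not_agree agree_iff_PiE[OF \<psi> \<phi>] by blast
  then have "eval_std \<mu> \<psi> < eval_std \<mu> \<phi>"
    using le by (simp add: order_less_le)
  moreover have "eval_std \<mu> \<phi> \<in> fractions (4 * n + 4)"
    using \<phi> \<mu> by (intro eval_std_in_fractions) (auto simp: Fm_def PiE_def Pi_def)
  ultimately have "(\<mu>, eval_std \<mu> \<phi>) \<in> ?G \<phi> - ?G \<psi>"
    using \<mu> by simp
  moreover have "?G \<psi> \<subseteq> ?G \<phi>"
  proof
    fix x
    assume "x \<in> ?G \<psi>"
    then obtain \<mu>' r where "x = (\<mu>', r)" "\<mu>' \<in> {..<n} \<rightarrow>\<^sub>E fractions (4 * n + 4)"
      and "r \<in> fractions (4 * n + 4)" "r \<le> eval_std \<mu>' \<psi>"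
      by blast
    then show "x \<in> ?G \<phi>"
      using le[of \<mu>'] by simp
  qed
  moreover have "finite (?G \<phi>)"
  proof (rule finite_SigmaI)
    show "finite ({..<n} \<rightarrow>\<^sub>E fractions (4 * n + 4))"
      by (simp add: finite_PiE finite_fractions)
    show "finite {r \<in> fractions (4 * n + 4). r \<le> eval_std \<mu> \<phi>}" for \<mu>
      using finite_fractions by (rule rev_finite_subset) blast
  qed
  ultimately have "?G \<psi> \<subset> ?G \<phi>" and "finite (?G \<phi>)"
    by blast+
  then show ?thesis
    unfolding graph_area_def by (rule psubset_card_mono[rotated])
qed

lemma not_join_irreducible_split:
  assumes \<phi>: "\<phi> \<in> Fm n" and not_bot: "cls n \<phi> \<noteq> cls n Bot"
    and not_ji: "\<not> join_irreducible n (cls n \<phi>)"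
  obtains \<psi> \<chi> where "\<psi> \<in> Fm n" "\<chi> \<in> Fm n" "cls n \<phi> = cls n (Or \<psi> \<chi>)"
    and "graph_area n \<psi> < graph_area n \<phi>" "graph_area n \<chi> < graph_area n \<phi>"
    and "graph_area n (And \<psi> \<chi>) < graph_area n \<phi>"
proof -
  obtain \<psi> \<chi> where \<psi>: "\<psi> \<in> Fm n" and \<chi>: "\<chi> \<in> Fm n" and split: "cls n \<phi> = cls n (Or \<psi> \<chi>)"
    and "cls n \<phi> \<noteq> cls n \<psi>" "cls n \<phi> \<noteq> cls n \<chi>"
    using \<phi> not_bot not_ji unfolding join_irreducible_def NM_free_def by blast
  then have not_agree: "\<not> agree n \<psi> \<phi>" "\<not> agree n \<chi> \<phi>"
    using \<phi> by (metis cls_eq_iff_agree)+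
  have max: "eval_std \<mu> \<phi> = max (eval_std \<mu> \<psi>) (eval_std \<mu> \<chi>)"
    if "\<mu> \<in> {..<n} \<rightarrow>\<^sub>E fractions (4 * n + 4)" for \<mu>
    using split that \<phi> \<psi> \<chi> agree_iff_PiE[of \<phi> n "Or \<psi> \<chi>"] by (simp add: cls_eq_iff_agree)
  have "\<not> agree n (And \<psi> \<chi>) \<phi>"
  proof
    assume "agree n (And \<psi> \<chi>) \<phi>"
    then have "eval_std \<mu> \<psi> = eval_std \<mu> \<phi>" if "\<mu> \<in> {..<n} \<rightarrow>\<^sub>E fractions (4 * n + 4)" for \<mu>
      using that max[OF that] \<phi> \<psi> \<chi> agree_iff_PiE[of "And \<psi> \<chi>" n \<phi>] by fastforce
    then show False
      using not_agree(1) \<phi> \<psi> agree_iff_PiE by blast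
  qed
  then show ?thesis
    using that[OF \<psi> \<chi> split] not_agree \<phi> \<psi> \<chi> max
    by (simp add: graph_area_less)
qed

lemma valuation_eq_on_cls:
  assumes "is_valuation n \<nu>" "is_valuation n \<nu>'" "\<nu> (cls n Bot) = \<nu>' (cls n Bot)"
    and "\<And>X. join_irreducible n X \<Longrightarrow> \<nu> X = \<nu>' X"
  shows "\<phi> \<in> Fm n \<Longrightarrow> \<nu> (cls n \<phi>) = \<nu>' (cls n \<phi>)"
proof (induction "graph_area n \<phi>" arbitrary: \<phi> rule: less_induct)
  case less
  show ?case
  proof (cases "cls n \<phi> = cls n Bot \<or> join_irreducible n (cls n \<phi>)")
    case True
    then show ?thesis
      using assms by auto
  next
    case False
    then obtain \<psi> \<chi> where "\<psi> \<in> Fm n" "\<chi> \<in> Fm n" "cls n \<phi> = cls n (Or \<psi> \<chi>)"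
      and "graph_area n \<psi> < graph_area n \<phi>" "graph_area n \<chi> < graph_area n \<phi>"
      and "graph_area n (And \<psi> \<chi>) < graph_area n \<phi>"
      using not_join_irreducible_split[OF less.prems] by blast
    then show ?thesis
      using less.hyps assms(1,2) unfolding is_valuation_def
      by (metis Fm_simps(4) add_right_cancel add.commute)
  qed
qed

lemma chi_plus_eq_count_val: "chi_plus n = count_val n"
  unfolding chi_plus_def
proof (rule the_equality)
  show "is_valuation n (count_val n) \<and> count_val n (cls n Bot) = 0 \<and>
      (\<forall>X. join_irreducible n X \<longrightarrow> count_val n X = (if idempotent_cls n X then 1 else 0)) \<and>
      (\<forall>X. X \<notin> NM_free n \<longrightarrow> count_val n X = 0)"
    using is_valuation_count_val count_val_Bot count_val_join_irreducible count_val_outside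
    by simp
next
  fix \<nu>
  assume \<nu>: "is_valuation n \<nu> \<and> \<nu> (cls n Bot) = 0 \<and>
      (\<forall>X. join_irreducible n X \<longrightarrow> \<nu> X = (if idempotent_cls n X then 1 else 0)) \<and>
      (\<forall>X. X \<notin> NM_free n \<longrightarrow> \<nu> X = 0)"
  show "\<nu> = count_val n"
  proof
    fix X
    show "\<nu> X = count_val n X"
    proof (cases "X \<in> NM_free n")
      case True
      then show ?thesis
        using \<nu> valuation_eq_on_cls[of n \<nu> "count_val n"] is_valuation_count_val count_val_Bot
          count_val_join_irreducible unfolding NM_free_def by auto
    next
      case False
      then show ?thesis
        using \<nu> by (simp add: count_val_outside)
    qed
  qed
qed

theorem theorem5:
  fixes n :: nat and \<phi> :: form
  assumes "n \<ge> 1" and "\<phi> \<in> Fm n"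
  shows "chi_plus n (cls n \<phi>) =
    real (card {\<mu> \<in> {..<n} \<rightarrow>\<^sub>E {0, 1/2, 1}. eval_std \<mu> \<phi> = 1})"
  using assms(2) by (simp add: chi_plus_eq_count_val count_val_cls models3_def)

end
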